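(* Let $\mathcal{H}$ be an infinite-dimensional separable Hilbert space, let $A\in\mathcal{B}(\mathcal{H})$ be self-adjoint and let $\mathbf{c}=\operatorname{diag}(c_1,c_2,\dots)$ with real $c_1\ge c_2\ge\cdots$ be a finite rank operator. Let $\alpha=\sum_{j=1}^\infty c_j\nu_j(A)$ and $\beta=\sum_{j=1}^\infty c_j\lambda_j(A)$. Then $\overline{W_{\mathbf{c}}(A)}=[\alpha,\beta]$.
   Context: For self-adjoint $T\in\mathcal{B}(\mathcal{H})$ and $k\in\mathbb{N}$: $\lambda_k(T)=\sup\{\lambda_k(V^*TV): V:\mathbb{C}^k\to\mathcal{H} \text{ an isometry}\}$ (for a self-adjoint $k\times k$ matrix, $\lambda_k$ is its smallest eigenvalue), and $\nu_k(T)=\inf_{\mathcal{M}\subseteq\mathcal{H},\ \dim\mathcal{M}=k}\ \max_{x\in\mathcal{M},\|x\|=1}\langle Tx,x\rangle$ $(=-\lambda_k(-T))$. The $\mathbf{c}$-numerical range is $W_{\mathbf{c}}(A)=\{\sum_{j\ge1} c_j\langle Ae_j,e_j\rangle: \{e_j\}_{j\ge1}\text{ an orthonormal basis of }\mathcal{H}\}$ (only finitely many $c_j$ are nonzero). *)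

theory Defs
  imports "HOL-Analysis.Analysis"
begin

text \<open>An abstract complex Hilbert space: an additive group 'a with a complex scalar
multiplication sm and an inner product ip (linear in the first argument).\<close>

definition complex_inner_space ::
  "(complex \<Rightarrow> 'a::ab_group_add \<Rightarrow> 'a) \<Rightarrow> ('a \<Rightarrow> 'a \<Rightarrow> complex) \<Rightarrow> bool" where
  "complex_inner_space sm ip \<longleftrightarrow>
     (\<forall>x. sm 1 x = x) \<and>
     (\<forall>a b x. sm a (sm b x) = sm (a * b) x) \<and>
     (\<forall>a x y. sm a (x + y) = sm a x + sm a y) \<and>
     (\<forall>a b x. sm (a + b) x = sm a x + sm b x) \<and>
     (\<forall>x y z. ip (x + y) z = ip x z + ip y z) \<and>
     (\<forall>a x y. ip (sm a x) y = a * ip x y) \<and>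
     (\<forall>x y. ip y x = cnj (ip x y)) \<and>
     (\<forall>x. 0 \<le> Re (ip x x)) \<and>
     (\<forall>x. ip x x = 0 \<longrightarrow> x = 0)"

definition hnorm :: "('a \<Rightarrow> 'a \<Rightarrow> complex) \<Rightarrow> 'a \<Rightarrow> real" where
  "hnorm ip x = sqrt (Re (ip x x))"

definition hilbert_complete :: "('a::ab_group_add \<Rightarrow> 'a \<Rightarrow> complex) \<Rightarrow> bool" where
  "hilbert_complete ip \<longleftrightarrow>
     (\<forall>X::nat \<Rightarrow> 'a. (\<forall>\<epsilon>>0. \<exists>N. \<forall>m\<ge>N. \<forall>n\<ge>N. hnorm ip (X m - X n) < \<epsilon>)
        \<longrightarrow> (\<exists>L. (\<lambda>n. hnorm ip (X n - L)) \<longlonglongrightarrow> 0))"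

definition hilbert_separable :: "('a::ab_group_add \<Rightarrow> 'a \<Rightarrow> complex) \<Rightarrow> bool" where
  "hilbert_separable ip \<longleftrightarrow>
     (\<exists>D. countable D \<and> (\<forall>x. \<forall>\<epsilon>>0. \<exists>d\<in>D. hnorm ip (x - d) < \<epsilon>))"

definition hspan :: "(complex \<Rightarrow> 'a::ab_group_add \<Rightarrow> 'a) \<Rightarrow> 'a set \<Rightarrow> 'a set" where
  "hspan sm S = {y. \<exists>F a. finite F \<and> F \<subseteq> S \<and> y = (\<Sum>s\<in>F. sm (a s) s)}"

definition infinite_dimensional :: "(complex \<Rightarrow> 'a::ab_group_add \<Rightarrow> 'a) \<Rightarrow> bool" where
  "infinite_dimensional sm \<longleftrightarrow> (\<forall>S. finite S \<longrightarrow> hspan sm S \<noteq> UNIV)"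

definition separable_inf_dim_hilbert ::
  "(complex \<Rightarrow> 'a::ab_group_add \<Rightarrow> 'a) \<Rightarrow> ('a \<Rightarrow> 'a \<Rightarrow> complex) \<Rightarrow> bool" where
  "separable_inf_dim_hilbert sm ip \<longleftrightarrow>
     complex_inner_space sm ip \<and> hilbert_complete ip \<and> hilbert_separable ip \<and>
     infinite_dimensional sm"

definition bounded_op ::
  "(complex \<Rightarrow> 'a::ab_group_add \<Rightarrow> 'a) \<Rightarrow> ('a \<Rightarrow> 'a \<Rightarrow> complex) \<Rightarrow> ('a \<Rightarrow> 'a) \<Rightarrow> bool" where
  "bounded_op sm ip T \<longleftrightarrow>
     (\<forall>x y. T (x + y) = T x + T y) \<and> (\<forall>a x. T (sm a x) = sm a (T x)) \<and>
     (\<exists>K. \<forall>x. hnorm ip (T x) \<le> K * hnorm ip x)"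

definition self_adjoint_op ::
  "(complex \<Rightarrow> 'a::ab_group_add \<Rightarrow> 'a) \<Rightarrow> ('a \<Rightarrow> 'a \<Rightarrow> complex) \<Rightarrow> ('a \<Rightarrow> 'a) \<Rightarrow> bool" where
  "self_adjoint_op sm ip T \<longleftrightarrow> bounded_op sm ip T \<and> (\<forall>x y. ip (T x) y = ip x (T y))"

definition orthonormal_on :: "('a \<Rightarrow> 'a \<Rightarrow> complex) \<Rightarrow> nat set \<Rightarrow> (nat \<Rightarrow> 'a) \<Rightarrow> bool" where
  "orthonormal_on ip I e \<longleftrightarrow> (\<forall>i\<in>I. \<forall>j\<in>I. ip (e i) (e j) = (if i = j then 1 else 0))"

text \<open>Orthonormal basis {e_j}_{j>=1}: a maximal orthonormal family.\<close>
definition onb :: "('a::zero \<Rightarrow> 'a \<Rightarrow> complex) \<Rightarrow> (nat \<Rightarrow> 'a) \<Rightarrow> bool" where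
  "onb ip e \<longleftrightarrow> orthonormal_on ip {1..} e \<and> (\<forall>x. (\<forall>j\<ge>1. ip x (e j) = 0) \<longrightarrow> x = 0)"

text \<open>Eigenvalues and smallest eigenvalue of a k x k complex matrix M (entries M i j, 0-based).\<close>
definition mat_eigenvalue :: "nat \<Rightarrow> (nat \<Rightarrow> nat \<Rightarrow> complex) \<Rightarrow> complex \<Rightarrow> bool" where
  "mat_eigenvalue k M \<mu> \<longleftrightarrow>
     (\<exists>x::nat \<Rightarrow> complex. (\<exists>i<k. x i \<noteq> 0) \<and> (\<forall>i<k. (\<Sum>j<k. M i j * x j) = \<mu> * x i))"

definition smallest_eigenvalue :: "nat \<Rightarrow> (nat \<Rightarrow> nat \<Rightarrow> complex) \<Rightarrow> real" where
  "smallest_eigenvalue k M = Min {Re \<mu> | \<mu>. mat_eigenvalue k M \<mu>}"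

text \<open>The compression V^* T V of T by the isometry V : C^k -> H, V(epsilon_j) = v_(j+1),
  i.e. the k x k matrix with (i,j) entry <T v_(j+1), v_(i+1)>.  Isometries C^k -> H
  correspond exactly to orthonormal k-tuples v_1..v_k.\<close>
definition compression :: "('a \<Rightarrow> 'a \<Rightarrow> complex) \<Rightarrow> ('a \<Rightarrow> 'a) \<Rightarrow> (nat \<Rightarrow> 'a) \<Rightarrow> nat \<Rightarrow> nat \<Rightarrow> complex" where
  "compression ip T v = (\<lambda>i j. ip (T (v (Suc j))) (v (Suc i)))"

definition lambda_k :: "('a \<Rightarrow> 'a \<Rightarrow> complex) \<Rightarrow> ('a \<Rightarrow> 'a) \<Rightarrow> nat \<Rightarrow> real" where
  "lambda_k ip T k = Sup {smallest_eigenvalue k (compression ip T v) | v. orthonormal_on ip {1..k} v}"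

text \<open>nu_k(T) = inf over k-dimensional subspaces M of max over unit x in M of <Tx,x>
  (the max is attained, so it is written as Sup).
  A k-dimensional subspace is the span of k linearly independent vectors v_1..v_k.\<close>
definition lin_indep_tuple :: "(complex \<Rightarrow> 'a::ab_group_add \<Rightarrow> 'a) \<Rightarrow> nat \<Rightarrow> (nat \<Rightarrow> 'a) \<Rightarrow> bool" where
  "lin_indep_tuple sm k v \<longleftrightarrow>
     (\<forall>a::nat \<Rightarrow> complex. (\<Sum>j\<in>{1..k}. sm (a j) (v j)) = 0 \<longrightarrow> (\<forall>j\<in>{1..k}. a j = 0))"

definition nu_k :: "(complex \<Rightarrow> 'a::ab_group_add \<Rightarrow> 'a) \<Rightarrow> ('a \<Rightarrow> 'a \<Rightarrow> complex) \<Rightarrow> ('a \<Rightarrow> 'a) \<Rightarrow> nat \<Rightarrow> real" where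
  "nu_k sm ip T k = Inf {Sup {Re (ip (T x) x) | x. x \<in> hspan sm (v ` {1..k}) \<and> hnorm ip x = 1}
                         | v. lin_indep_tuple sm k v}"

definition c_numerical_range :: "('a::zero \<Rightarrow> 'a \<Rightarrow> complex) \<Rightarrow> (nat \<Rightarrow> real) \<Rightarrow> ('a \<Rightarrow> 'a) \<Rightarrow> complex set" where
  "c_numerical_range ip c A =
     {\<Sum>j\<in>{j. 1 \<le> j \<and> c j \<noteq> 0}. of_real (c j) * ip (A (e j)) (e j) | e. onb ip e}"

end

theory Submission
  imports Defs "Jordan_Normal_Form.Spectral_Radius"
begin

text \<open>
  The compression of \<open>A\<close> to a finite-dimensional subspace obeys the Rayleigh--Ritz bounds, and
  peeling off one of its eigenvectors at a time gives the Ky Fan inequalities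
  \<open>\<nu>\<^sub>1 + ... + \<nu>\<^sub>k \<le> \<langle>A u\<^sub>1, u\<^sub>1\<rangle> + ... + \<langle>A u\<^sub>k, u\<^sub>k\<rangle> \<le> \<lambda>\<^sub>1 + ... + \<lambda>\<^sub>k\<close> for every
  orthonormal \<open>k\<close>-tuple \<open>u\<close>. The weights \<open>c\<^sub>j\<close> decrease and vanish eventually, so they are
  nonnegative, and summation by parts turns these inequalities into
  \<open>\<alpha> \<le> \<Sum>\<^sub>j c\<^sub>j \<langle>A u\<^sub>j, u\<^sub>j\<rangle> \<le> \<beta>\<close>.
  Conversely, choosing the \<open>u\<^sub>k\<close> greedily with \<open>\<langle>A u\<^sub>k, u\<^sub>k\<rangle>\<close> close to \<open>\<lambda>\<^sub>k\<close> (or to \<open>\<nu>\<^sub>k\<close>)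
  gives weighted sums arbitrarily close to \<open>\<beta>\<close> (or to \<open>\<alpha>\<close>). Rotating each of these two tuples
  towards a third orthonormal tuple orthogonal to both keeps it orthonormal, so by the intermediate
  value theorem every value in between is attained. Finally, in a separable space every orthonormal tuple
  extends to an orthonormal basis, so these weighted sums are exactly the points of \<open>W\<^sub>c(A)\<close>.
\<close>

section \<open>Finite-dimensional linear algebra\<close>

lemma mat_eigenvalues_eq_spectrum:
  "{\<mu>. mat_eigenvalue k M \<mu>} = spectrum (mat k k (\<lambda>(i, j). M i j))"
proof -
  let ?M = "mat k k (\<lambda>(i, j). M i j)"
  have "mat_eigenvalue k M \<mu> \<longleftrightarrow> (\<exists>v. v \<in> carrier_vec k \<and> v \<noteq> 0\<^sub>v k \<and> ?M *\<^sub>v v = \<mu> \<cdot>\<^sub>v v)" for \<mu>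
  proof
    assume "mat_eigenvalue k M \<mu>"
    then obtain x where "\<exists>i<k. x i \<noteq> 0" "\<forall>i<k. (\<Sum>j<k. M i j * x j) = \<mu> * x i"
      unfolding mat_eigenvalue_def by blast
    then show "\<exists>v. v \<in> carrier_vec k \<and> v \<noteq> 0\<^sub>v k \<and> ?M *\<^sub>v v = \<mu> \<cdot>\<^sub>v v"
      by (intro exI[of _ "vec k x"])
        (auto simp: vec_eq_iff scalar_prod_def row_def atLeast0LessThan)
  next
    assume "\<exists>v. v \<in> carrier_vec k \<and> v \<noteq> 0\<^sub>v k \<and> ?M *\<^sub>v v = \<mu> \<cdot>\<^sub>v v"
    then obtain v where v: "v \<in> carrier_vec k" "v \<noteq> 0\<^sub>v k" "?M *\<^sub>v v = \<mu> \<cdot>\<^sub>v v"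
      by blast
    have "(\<Sum>j<k. M i j * v $ j) = \<mu> * v $ i" if "i < k" for i
      using arg_cong[OF v(3), of "\<lambda>w. w $ i"] that v(1)
      by (simp add: scalar_prod_def row_def atLeast0LessThan)
    moreover have "\<exists>i<k. v $ i \<noteq> 0"
      using v(1,2) by (auto simp: vec_eq_iff)
    ultimately show "mat_eigenvalue k M \<mu>"
      unfolding mat_eigenvalue_def by blast
  qed
  then show ?thesis
    by (auto simp: spectrum_def eigenvalue_def eigenvector_def)
qed

lemma finite_mat_eigenvalues: "finite {\<mu>. mat_eigenvalue k M \<mu>}"
  unfolding mat_eigenvalues_eq_spectrum by (rule card_finite_spectrum(1)[of _ k]) simp

lemma mat_eigenvalue_exists: "0 < k \<Longrightarrow> \<exists>\<mu>. mat_eigenvalue k M \<mu>"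
  using spectrum_non_empty[of "mat k k (\<lambda>(i, j). M i j)" k] mat_eigenvalues_eq_spectrum
  by auto

lemma homogeneous_system_eliminate:
  fixes M :: "nat \<Rightarrow> 'i \<Rightarrow> 'a::field"
  assumes "finite I" and "i0 \<in> I" and "M q i0 \<noteq> 0"
    and b: "\<forall>l\<in>L. (\<Sum>i\<in>I - {i0}. (M l i - M l i0 * M q i / M q i0) * b i) = 0"
  defines "a \<equiv> \<lambda>i. if i = i0 then - (\<Sum>i\<in>I - {i0}. M q i * b i) / M q i0 else b i"
  shows "\<forall>l\<in>insert q L. (\<Sum>i\<in>I. M l i * a i) = 0"
proof -
  have split: "(\<Sum>i\<in>I. f i * a i) = f i0 * a i0 + (\<Sum>i\<in>I - {i0}. f i * b i)" for f
    using assms(1,2) by (simp add: sum.remove a_def)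
  show ?thesis
  proof
    fix l assume "l \<in> insert q L"
    then consider "l = q" | "l \<in> L"
      by blast
    then show "(\<Sum>i\<in>I. M l i * a i) = 0"
    proof cases
      case 1
      with \<open>M q i0 \<noteq> 0\<close> show ?thesis
        unfolding split by (simp add: a_def)
    next
      case 2
      with b have "(\<Sum>i\<in>I - {i0}. (M l i - M l i0 * M q i / M q i0) * b i) = 0"
        by blast
      with \<open>M q i0 \<noteq> 0\<close> show ?thesis
        unfolding split by (simp add: a_def sum_subtractf sum_distrib_left sum_divide_distrib algebra_simps)
    qed
  qed
qed

lemma homogeneous_system_nontrivial_solution:
  fixes M :: "nat \<Rightarrow> 'i \<Rightarrow> 'a::field"
  assumes "finite I" and "p < card I"
  shows "\<exists>a. (\<exists>i\<in>I. a i \<noteq> 0) \<and> (\<forall>l\<in>{1..p}. (\<Sum>i\<in>I. M l i * a i) = 0)"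
  using assms
proof (induction p arbitrary: I M)
  case 0
  then obtain i where "i \<in> I"
    by (metis card.empty card_gt_0_iff ex_in_conv)
  then show ?case
    by (intro exI[of _ "\<lambda>_. 1"]) auto
next
  case (Suc p)
  show ?case
  proof (cases "\<forall>i\<in>I. M (Suc p) i = 0")
    case True
    from Suc.IH[of I M] Suc.prems obtain a where
      "\<exists>i\<in>I. a i \<noteq> 0" "\<forall>l\<in>{1..p}. (\<Sum>i\<in>I. M l i * a i) = 0"
      by auto
    with True show ?thesis
      by (intro exI[of _ a]) (auto simp: le_Suc_eq)
  next
    case False
    then obtain i0 where i0: "i0 \<in> I" "M (Suc p) i0 \<noteq> 0"
      by blast
    have "p < card (I - {i0})"
      using Suc.prems i0(1) by simp
    with Suc.IH[of "I - {i0}" "\<lambda>l i. M l i - M l i0 * M (Suc p) i / M (Suc p) i0"] Suc.prems(1)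
    obtain b where b: "\<exists>i\<in>I - {i0}. b i \<noteq> 0"
      "\<forall>l\<in>{1..p}. (\<Sum>i\<in>I - {i0}. (M l i - M l i0 * M (Suc p) i / M (Suc p) i0) * b i) = 0"
      by auto
    define a where "a i = (if i = i0 then - (\<Sum>i\<in>I - {i0}. M (Suc p) i * b i) / M (Suc p) i0 else b i)"
      for i
    have "\<forall>l\<in>insert (Suc p) {1..p}. (\<Sum>i\<in>I. M l i * a i) = 0"
      unfolding a_def using homogeneous_system_eliminate[OF Suc.prems(1) i0 b(2)] by simp
    moreover have "insert (Suc p) {1..p} = {1..Suc p}"
      by auto
    moreover have "\<exists>i\<in>I. a i \<noteq> 0"
      using b(1) by (auto simp: a_def)
    ultimately show ?thesis
      by metis
  qed
qed

lemma of_real_Re_if_cnj_eq: "cnj z = z \<Longrightarrow> complex_of_real (Re z) = z"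
  by (rule of_real_Re) (simp add: Reals_cnj_iff)

lemma sum_atLeast1_atMost_Suc: "(\<Sum>i\<in>{1..Suc k}. g i) = g 1 + (\<Sum>i\<in>{1..k}. g (Suc i))"
proof -
  have "(\<Sum>i\<in>{1..Suc k}. g i) = g 1 + (\<Sum>i\<in>{Suc 1..Suc k}. g i)"
    by (rule sum.atLeast_Suc_atMost) simp
  also have "(\<Sum>i\<in>{Suc 1..Suc k}. g i) = (\<Sum>i\<in>{1..k}. g (Suc i))"
    by (rule sum.shift_bounds_cl_Suc_ivl)
  finally show ?thesis .
qed

lemma image_atLeast1_atMost_Suc: "t ` {1..Suc k} = insert (t 1) ((\<lambda>j. t (Suc j)) ` {1..k})"
proof -
  have "{1..Suc k} = insert 1 {Suc 1..Suc k}"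
    by (rule atLeastAtMost_insertL[symmetric]) simp
  also have "{Suc 1..Suc k} = Suc ` {1..k}"
    by (rule image_Suc_atLeastAtMost[symmetric])
  finally have "{1..Suc k} = insert 1 (Suc ` {1..k})" .
  then show ?thesis
    by (simp only: image_insert image_image)
qed

section \<open>Inner product spaces\<close>

locale inner_space =
  fixes sm :: "complex \<Rightarrow> 'a::ab_group_add \<Rightarrow> 'a" and ip :: "'a \<Rightarrow> 'a \<Rightarrow> complex"
  assumes complex_inner_space: "complex_inner_space sm ip"
begin

lemma sm_one [simp]: "sm 1 x = x"
  and sm_sm [simp]: "sm a (sm b x) = sm (a * b) x"
  and sm_add_right: "sm a (x + y) = sm a x + sm a y"
  and sm_add_left: "sm (a + b) x = sm a x + sm b x"
  and ip_add_left: "ip (x + y) z = ip x z + ip y z"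
  and ip_sm_left [simp]: "ip (sm a x) y = a * ip x y"
  and ip_commute: "ip y x = cnj (ip x y)"
  and ip_self_nonneg: "0 \<le> Re (ip x x)"
  and ip_self_eq_0: "ip x x = 0 \<Longrightarrow> x = 0"
  using complex_inner_space unfolding complex_inner_space_def by iprover+

lemma sm_zero_left [simp]: "sm 0 x = 0"
  using sm_add_left[of 0 0 x] by simp

lemma sm_zero_right [simp]: "sm a 0 = 0"
  using sm_add_right[of a 0 0] by simp

lemma sm_minus_left: "sm (- a) x = - sm a x"
  using sm_add_left[of "- a" a x] by (simp add: eq_neg_iff_add_eq_0)

lemma sm_minus_right: "sm a (- x) = - sm a x"
  using sm_add_right[of a "- x" x] by (simp add: eq_neg_iff_add_eq_0)

lemma sm_diff_right: "sm a (x - y) = sm a x - sm a y"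
  by (metis diff_conv_add_uminus sm_add_right sm_minus_right)

lemma sm_sum_right: "sm a (\<Sum>i\<in>F. f i) = (\<Sum>i\<in>F. sm a (f i))"
  by (induction F rule: infinite_finite_induct) (auto simp: sm_add_right)

lemma ip_add_right: "ip x (y + z) = ip x y + ip x z"
  by (metis ip_commute ip_add_left complex_cnj_add)

lemma ip_sm_right [simp]: "ip x (sm a y) = cnj a * ip x y"
  by (metis ip_commute ip_sm_left complex_cnj_mult)

lemma ip_zero_left [simp]: "ip 0 x = 0"
  using ip_sm_left[of 0 0 x] by simp

lemma ip_zero_right [simp]: "ip x 0 = 0"
  using ip_sm_right[of x 0 0] by simp

lemma ip_minus_left: "ip (- x) y = - ip x y"
  using ip_sm_left[of "-1" x y] sm_minus_left[of 1 x] by simp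

lemma ip_minus_right: "ip x (- y) = - ip x y"
  using ip_sm_right[of x "-1" y] sm_minus_left[of 1 y] by simp

lemma ip_diff_left: "ip (x - y) z = ip x z - ip y z"
  by (metis diff_conv_add_uminus ip_add_left ip_minus_left)

lemma ip_diff_right: "ip x (y - z) = ip x y - ip x z"
  by (metis diff_conv_add_uminus ip_add_right ip_minus_right)

lemma ip_sum_left: "ip (\<Sum>i\<in>F. f i) y = (\<Sum>i\<in>F. ip (f i) y)"
  by (induction F rule: infinite_finite_induct) (auto simp: ip_add_left)

lemma ip_sum_right: "ip y (\<Sum>i\<in>F. f i) = (\<Sum>i\<in>F. ip y (f i))"
  by (induction F rule: infinite_finite_induct) (auto simp: ip_add_right)

lemma ip_eq_0_commute: "ip x y = 0 \<longleftrightarrow> ip y x = 0"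
  by (subst ip_commute) simp

definition sqnorm :: "'a \<Rightarrow> real" where
  "sqnorm x = Re (ip x x)"

lemma ip_self_eq_sqnorm: "ip x x = complex_of_real (sqnorm x)"
  unfolding sqnorm_def using of_real_Re_if_cnj_eq[of "ip x x"] ip_commute[of x x] by simp

lemma sqnorm_zero [simp]: "sqnorm 0 = 0"
  by (simp add: sqnorm_def)

lemma sqnorm_nonneg [simp]: "0 \<le> sqnorm x"
  unfolding sqnorm_def by (rule ip_self_nonneg)

lemma sqnorm_eq_0_iff [simp]: "sqnorm x = 0 \<longleftrightarrow> x = 0"
  using ip_self_eq_sqnorm[of x] ip_self_eq_0[of x] by auto

lemma sqnorm_pos: "x \<noteq> 0 \<Longrightarrow> 0 < sqnorm x"
  using sqnorm_nonneg[of x] sqnorm_eq_0_iff[of x] by linarith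

lemma hnorm_eq_sqrt_sqnorm: "hnorm ip x = sqrt (sqnorm x)"
  unfolding hnorm_def sqnorm_def ..

lemma hnorm_eq_1_iff: "hnorm ip x = 1 \<longleftrightarrow> sqnorm x = 1"
  by (simp add: hnorm_eq_sqrt_sqnorm)

lemma sqnorm_sm: "sqnorm (sm a x) = (cmod a)\<^sup>2 * sqnorm x"
proof -
  have "ip (sm a x) (sm a x) = (a * cnj a) * ip x x"
    by (simp add: ac_simps)
  also have "\<dots> = of_real ((cmod a)\<^sup>2 * sqnorm x)"
    by (simp only: complex_norm_square[symmetric] ip_self_eq_sqnorm of_real_mult)
  finally show ?thesis
    unfolding sqnorm_def[of "sm a x"] by simp
qed

lemma sqnorm_eq_0_if_small: "(\<And>\<epsilon>. 0 < \<epsilon> \<Longrightarrow> sqnorm x < \<epsilon>) \<Longrightarrow> x = 0"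
  using sqnorm_pos[of x] by (cases "x = 0") auto

lemma pythagoras: "ip x y = 0 \<Longrightarrow> sqnorm (x + y) = sqnorm x + sqnorm y"
  using ip_eq_0_commute[of x y] by (simp add: sqnorm_def ip_add_left ip_add_right)

lemma cauchy_schwarz: "(cmod (ip x y))\<^sup>2 \<le> sqnorm x * sqnorm y"
proof (cases "y = 0")
  case True
  then show ?thesis by simp
next
  case False
  define r where "r = sqnorm y"
  define a where "a = ip x y"
  have r: "0 < r"
    using False sqnorm_pos r_def by simp
  define v where "v = sm (of_real r) x - sm a y"
  have "ip v v = of_real r * of_real r * ip x x - of_real r * cnj a * ip x y
      - a * of_real r * ip y x + a * cnj a * ip y y"
    by (simp add: v_def ip_diff_left ip_diff_right algebra_simps)
  also have "\<dots> = of_real r * (of_real r * ip x x - a * cnj a)"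
    using ip_commute[of x y] by (simp add: a_def r_def ip_self_eq_sqnorm algebra_simps)
  also have "\<dots> = of_real (r * (r * sqnorm x - (cmod a)\<^sup>2))"
    by (simp add: ip_self_eq_sqnorm complex_norm_square[symmetric] del: of_real_power)
  finally have "0 \<le> r * (r * sqnorm x - (cmod a)\<^sup>2)"
    using sqnorm_nonneg[of v] by (simp add: sqnorm_def)
  with r show ?thesis
    by (simp add: a_def r_def zero_le_mult_iff mult.commute)
qed

definition normalize :: "'a \<Rightarrow> 'a" where
  "normalize z = sm (of_real (1 / sqrt (sqnorm z))) z"

lemma sqnorm_normalize: "z \<noteq> 0 \<Longrightarrow> sqnorm (normalize z) = 1"
  unfolding normalize_def sqnorm_sm using sqnorm_pos[of z]
  by (simp add: power_divide norm_divide)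

lemma ip_normalize_self: "z \<noteq> 0 \<Longrightarrow> ip (normalize z) (normalize z) = 1"
  using sqnorm_normalize ip_self_eq_sqnorm by simp

lemma sm_sqrt_sqnorm_normalize: "z \<noteq> 0 \<Longrightarrow> sm (of_real (sqrt (sqnorm z))) (normalize z) = z"
  unfolding normalize_def using sqnorm_pos[of z] by simp

lemma ip_normalize_left: "ip (normalize z) y = 0 \<longleftrightarrow> ip z y = 0"
  unfolding normalize_def by (cases "z = 0") (auto simp: sqnorm_pos)

lemma hspan_iff: "y \<in> hspan sm S \<longleftrightarrow> (\<exists>F a. finite F \<and> F \<subseteq> S \<and> y = (\<Sum>s\<in>F. sm (a s) s))"
  unfolding hspan_def by simp

lemma hspan_zero [simp]: "0 \<in> hspan sm S"
  unfolding hspan_iff by (intro exI[of _ "{}"]) simp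

lemma hspan_base: "x \<in> S \<Longrightarrow> x \<in> hspan sm S"
  unfolding hspan_iff by (intro exI[of _ "{x}"] exI[of _ "\<lambda>_. 1"]) simp

lemma hspan_sm:
  assumes "x \<in> hspan sm S"
  shows "sm c x \<in> hspan sm S"
proof -
  obtain F a where "finite F" "F \<subseteq> S" "x = (\<Sum>s\<in>F. sm (a s) s)"
    using assms unfolding hspan_iff by blast
  moreover from this(3) have "sm c x = (\<Sum>s\<in>F. sm (c * a s) s)"
    by (simp add: sm_sum_right)
  ultimately show ?thesis
    unfolding hspan_iff by (intro exI[of _ F] exI[of _ "\<lambda>s. c * a s"]) simp
qed

lemma hspan_add:
  assumes "x \<in> hspan sm S" and "y \<in> hspan sm S"
  shows "x + y \<in> hspan sm S"
proof -
  obtain F a G b where F: "finite F" "F \<subseteq> S" "x = (\<Sum>s\<in>F. sm (a s) s)"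
    and G: "finite G" "G \<subseteq> S" "y = (\<Sum>s\<in>G. sm (b s) s)"
    using assms unfolding hspan_iff by blast
  have extend: "(\<Sum>s\<in>F \<union> G. sm (if s \<in> H then f s else 0) s) = (\<Sum>s\<in>H. sm (f s) s)"
    if "H \<subseteq> F \<union> G" for H f
  proof -
    have "(\<Sum>s\<in>F \<union> G. sm (if s \<in> H then f s else 0) s) = (\<Sum>s\<in>F \<union> G. if s \<in> H then sm (f s) s else 0)"
      by (rule sum.cong) simp_all
    also have "\<dots> = (\<Sum>s\<in>(F \<union> G) \<inter> H. sm (f s) s)"
      using F(1) G(1) by (simp add: sum.inter_restrict)
    finally show ?thesis
      using that by (simp add: Int_absorb1)
  qed
  define c where "c s = (if s \<in> F then a s else 0) + (if s \<in> G then b s else 0)" for s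
  have "x + y = (\<Sum>s\<in>F \<union> G. sm (c s) s)"
    unfolding c_def sm_add_left sum.distrib F(3) G(3) by (simp add: extend)
  with F G show ?thesis
    unfolding hspan_iff by (intro exI[of _ "F \<union> G"] exI[of _ c]) simp
qed

lemma hspan_diff: "x \<in> hspan sm S \<Longrightarrow> y \<in> hspan sm S \<Longrightarrow> x - y \<in> hspan sm S"
  using hspan_add[of x S "sm (-1) y"] hspan_sm[of y S "-1"] by (simp add: sm_minus_left)

lemma hspan_sum: "(\<And>i. i \<in> I \<Longrightarrow> f i \<in> hspan sm S) \<Longrightarrow> (\<Sum>i\<in>I. f i) \<in> hspan sm S"
  by (induction I rule: infinite_finite_induct) (auto intro: hspan_add)

lemma hspan_lincomb:
  "(\<And>i. i \<in> I \<Longrightarrow> f i \<in> hspan sm S) \<Longrightarrow> (\<Sum>i\<in>I. sm (a i) (f i)) \<in> hspan sm S"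
  by (rule hspan_sum) (auto intro: hspan_sm)

lemma hspan_subset_hspan:
  assumes "T \<subseteq> hspan sm S"
  shows "hspan sm T \<subseteq> hspan sm S"
proof
  fix y assume "y \<in> hspan sm T"
  then obtain F a where "F \<subseteq> T" "y = (\<Sum>s\<in>F. sm (a s) s)"
    unfolding hspan_iff by blast
  with assms show "y \<in> hspan sm S"
    by (auto intro!: hspan_lincomb)
qed

lemma hspan_mono: "T \<subseteq> S \<Longrightarrow> hspan sm T \<subseteq> hspan sm S"
  by (rule hspan_subset_hspan) (auto intro: hspan_base)

lemma hspan_eqI: "T \<subseteq> hspan sm S \<Longrightarrow> S \<subseteq> hspan sm T \<Longrightarrow> hspan sm T = hspan sm S"
  by (intro subset_antisym hspan_subset_hspan)

lemma hspan_empty: "hspan sm {} = {0}"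
  using hspan_iff[of _ "{}"] by auto

lemma hspan_insert_eq: "x \<in> hspan sm S \<Longrightarrow> hspan sm (insert x S) = hspan sm S"
  by (intro hspan_eqI) (auto intro: hspan_base)

lemma hspan_insert_cong:
  assumes "hspan sm A = hspan sm B"
  shows "hspan sm (insert x A) = hspan sm (insert x B)"
proof -
  have sub: "hspan sm C \<subseteq> hspan sm (insert x C)" for C
    by (rule hspan_mono) auto
  have "A \<subseteq> hspan sm (insert x B)" and "B \<subseteq> hspan sm (insert x A)"
    using assms sub[of A] sub[of B] hspan_base[of _ A] hspan_base[of _ B] by blast+
  then show ?thesis
    by (intro hspan_eqI) (auto intro: hspan_base)
qed

lemma ip_hspan_eq_0_right:
  assumes "\<And>s. s \<in> S \<Longrightarrow> ip z s = 0" and "y \<in> hspan sm S"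
  shows "ip z y = 0"
proof -
  obtain F a where "finite F" "F \<subseteq> S" "y = (\<Sum>s\<in>F. sm (a s) s)"
    using assms(2) unfolding hspan_iff by blast
  with assms(1) show ?thesis
    by (auto simp: ip_sum_right intro!: sum.neutral)
qed

lemma ip_hspan_eq_0_left:
  assumes "\<And>s. s \<in> S \<Longrightarrow> ip s z = 0" and "y \<in> hspan sm S"
  shows "ip y z = 0"
proof -
  have "ip z y = 0"
    by (rule ip_hspan_eq_0_right[OF _ assms(2)]) (simp add: ip_eq_0_commute[of z] assms(1))
  then show ?thesis
    by (simp add: ip_eq_0_commute[of y])
qed

end

section \<open>Orthonormal tuples and Gram--Schmidt\<close>

context inner_space
begin

abbreviation orthonormal :: "nat \<Rightarrow> (nat \<Rightarrow> 'a) \<Rightarrow> bool" where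
  "orthonormal n u \<equiv> orthonormal_on ip {1..n} u"

abbreviation tuple_span :: "nat \<Rightarrow> (nat \<Rightarrow> 'a) \<Rightarrow> 'a set" where
  "tuple_span n u \<equiv> hspan sm (u ` {1..n})"

lemma orthonormal_ip:
  "orthonormal n u \<Longrightarrow> i \<in> {1..n} \<Longrightarrow> j \<in> {1..n} \<Longrightarrow> ip (u i) (u j) = (if i = j then 1 else 0)"
  unfolding orthonormal_on_def by blast

lemma orthonormal_mono: "orthonormal n u \<Longrightarrow> m \<le> n \<Longrightarrow> orthonormal m u"
  unfolding orthonormal_on_def by auto

lemma orthonormal_shift: "orthonormal (Suc k) t \<Longrightarrow> orthonormal k (\<lambda>j. t (Suc j))"
  unfolding orthonormal_on_def by auto

lemma orthonormal_sqnorm: "orthonormal n u \<Longrightarrow> i \<in> {1..n} \<Longrightarrow> sqnorm (u i) = 1"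
  using orthonormal_ip[of n u i i] by (simp add: sqnorm_def)

lemma tuple_span_base: "i \<in> {1..n} \<Longrightarrow> u i \<in> tuple_span n u"
  by (intro hspan_base imageI)

lemma tuple_span_lincomb: "(\<Sum>j\<in>{1..n}. sm (a j) (u j)) \<in> tuple_span n u"
  by (intro hspan_lincomb tuple_span_base)

lemma tuple_span_tail_subset: "tuple_span k (\<lambda>j. t (Suc j)) \<subseteq> tuple_span (Suc k) t"
  unfolding image_atLeast1_atMost_Suc[of t k] by (rule hspan_mono) auto

lemma ip_lincomb_orthonormal:
  assumes "orthonormal n u" and "i \<in> {1..n}"
  shows "ip (\<Sum>j\<in>{1..n}. sm (a j) (u j)) (u i) = a i"
proof -
  have "ip (\<Sum>j\<in>{1..n}. sm (a j) (u j)) (u i) = (\<Sum>j\<in>{1..n}. if j = i then a j else 0)"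
    unfolding ip_sum_left by (rule sum.cong) (use assms in \<open>auto simp: orthonormal_ip\<close>)
  with assms(2) show ?thesis
    by simp
qed

lemma orthonormal_lin_indep:
  assumes "orthonormal k u"
  shows "lin_indep_tuple sm k u"
  unfolding lin_indep_tuple_def
proof (intro allI impI ballI)
  fix a j assume "(\<Sum>j\<in>{1..k}. sm (a j) (u j)) = 0" and "j \<in> {1..k}"
  then show "a j = 0"
    using ip_lincomb_orthonormal[OF assms, of j a] by simp
qed

lemma exists_unit_orthogonal_in_tuple_span:
  assumes "lin_indep_tuple sm (Suc m) v"
  shows "\<exists>e\<in>tuple_span (Suc m) v. ip e e = 1 \<and> (\<forall>l\<in>{1..m}. ip e (u l) = 0)"
proof -
  \<comment> \<open>\<open>m\<close> linear conditions on \<open>Suc m\<close> coefficients.\<close>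
  obtain a where a: "\<exists>i\<in>{1..Suc m}. a i \<noteq> 0"
    "\<forall>l\<in>{1..m}. (\<Sum>i\<in>{1..Suc m}. ip (v i) (u l) * a i) = 0"
    using homogeneous_system_nontrivial_solution[of "{1..Suc m}" m "\<lambda>l i. ip (v i) (u l)"]
    by auto
  define x where "x = (\<Sum>i\<in>{1..Suc m}. sm (a i) (v i))"
  have "x \<noteq> 0"
    using assms a(1) unfolding x_def lin_indep_tuple_def by blast
  moreover have "normalize x \<in> tuple_span (Suc m) v"
    unfolding normalize_def x_def by (intro hspan_sm tuple_span_lincomb)
  moreover have "ip x (u l) = 0" if "l \<in> {1..m}" for l
  proof -
    have "ip x (u l) = (\<Sum>i\<in>{1..Suc m}. ip (v i) (u l) * a i)"
      unfolding x_def ip_sum_left by (intro sum.cong refl) (simp add: mult.commute)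
    with a(2) that show ?thesis
      by simp
  qed
  ultimately show ?thesis
    by (intro bexI[of _ "normalize x"]) (auto simp: ip_normalize_self ip_normalize_left)
qed

lemma exists_unit_in_tuple_span:
  assumes "lin_indep_tuple sm k v" and "0 < k"
  shows "\<exists>x\<in>tuple_span k v. hnorm ip x = 1"
proof -
  obtain m where "k = Suc m"
    using assms(2) gr0_implies_Suc by blast
  with assms(1) obtain e where "e \<in> tuple_span k v" "ip e e = 1"
    using exists_unit_orthogonal_in_tuple_span by blast
  then show ?thesis
    by (intro bexI[of _ e]) (simp_all add: hnorm_eq_1_iff sqnorm_def)
qed

definition proj :: "nat \<Rightarrow> (nat \<Rightarrow> 'a) \<Rightarrow> 'a \<Rightarrow> 'a" where
  "proj n u x = (\<Sum>j\<in>{1..n}. sm (ip x (u j)) (u j))"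

lemma proj_in_tuple_span: "proj n u x \<in> tuple_span n u"
  unfolding proj_def by (rule tuple_span_lincomb)

lemma ip_proj_left: "orthonormal n u \<Longrightarrow> i \<in> {1..n} \<Longrightarrow> ip (proj n u x) (u i) = ip x (u i)"
  unfolding proj_def by (rule ip_lincomb_orthonormal)

lemma ip_sub_proj_eq_0:
  assumes "orthonormal n u" and "y \<in> tuple_span n u"
  shows "ip (x - proj n u x) y = 0"
proof (rule ip_hspan_eq_0_right[OF _ assms(2)])
  fix s assume "s \<in> u ` {1..n}"
  with assms(1) show "ip (x - proj n u x) s = 0"
    by (auto simp: ip_diff_left ip_proj_left)
qed

lemma proj_eq_self:
  assumes "orthonormal n u" and "y \<in> tuple_span n u"
  shows "proj n u y = y"
proof -
  have "ip (y - proj n u y) (y - proj n u y) = 0"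
    using assms proj_in_tuple_span by (intro ip_sub_proj_eq_0 hspan_diff)
  then have "y - proj n u y = 0"
    by (rule ip_self_eq_0)
  then show ?thesis
    by simp
qed

lemma tuple_span_eq_lincomb:
  "orthonormal n u \<Longrightarrow> y \<in> tuple_span n u \<Longrightarrow> y = (\<Sum>j\<in>{1..n}. sm (ip y (u j)) (u j))"
  using proj_eq_self unfolding proj_def by simp

lemma sqnorm_sub_proj_le:
  assumes "orthonormal n u" and "d \<in> tuple_span n u"
  shows "sqnorm (x - proj n u x) \<le> sqnorm (x - d)"
proof -
  have "ip (x - proj n u x) (proj n u x - d) = 0"
    using assms proj_in_tuple_span by (intro ip_sub_proj_eq_0 hspan_diff)
  then have "sqnorm ((x - proj n u x) + (proj n u x - d)) = sqnorm (x - proj n u x) + sqnorm (proj n u x - d)"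
    by (rule pythagoras)
  then show ?thesis
    by simp
qed

lemma orthonormal_card_le:
  assumes u: "orthonormal n u" and w: "orthonormal p w"
    and sub: "\<And>i. i \<in> {1..p} \<Longrightarrow> w i \<in> tuple_span n u"
  shows "p \<le> n"
proof (rule ccontr)
  assume "\<not> p \<le> n"
  then have "lin_indep_tuple sm (Suc n) w"
    by (intro orthonormal_lin_indep orthonormal_mono[OF w]) simp
  then obtain e where e: "e \<in> tuple_span (Suc n) w" "ip e e = 1" "\<forall>l\<in>{1..n}. ip e (u l) = 0"
    using exists_unit_orthogonal_in_tuple_span by blast
  have "tuple_span (Suc n) w \<subseteq> tuple_span n u"
    using sub \<open>\<not> p \<le> n\<close> by (intro hspan_subset_hspan) auto
  with e(1) have "e = proj n u e"
    using proj_eq_self[OF u, of e] by auto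
  also have "\<dots> = 0"
    using e(3) by (simp add: proj_def)
  finally show False
    using e(2) by simp
qed

lemma image_fun_upd_Suc: "(u(Suc n := e)) ` {1..Suc n} = insert e (u ` {1..n})"
  by (auto simp: image_def le_Suc_eq)

lemma orthonormal_fun_upd:
  assumes "orthonormal n u" and "ip e e = 1" and "\<And>i. i \<in> {1..n} \<Longrightarrow> ip e (u i) = 0"
  shows "orthonormal (Suc n) (u(Suc n := e))"
proof -
  have "ip (u i) e = 0" if "i \<in> {1..n}" for i
    using assms(3)[OF that] ip_commute[of "u i" e] by simp
  with assms show ?thesis
    unfolding orthonormal_on_def by (auto simp: le_Suc_eq)
qed

lemma orthonormal_extend_within:
  assumes u: "orthonormal m u" and v: "lin_indep_tuple sm (Suc m) v"
  shows "\<exists>e\<in>tuple_span (Suc m) v. sqnorm e = 1 \<and> orthonormal (Suc m) (u(Suc m := e))"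
proof -
  obtain e where "e \<in> tuple_span (Suc m) v" "ip e e = 1" "\<forall>l\<in>{1..m}. ip e (u l) = 0"
    using exists_unit_orthogonal_in_tuple_span[OF v] by blast
  with u show ?thesis
    by (intro bexI[of _ e] conjI orthonormal_fun_upd) (simp_all add: sqnorm_def)
qed

definition gs_next :: "nat \<Rightarrow> (nat \<Rightarrow> 'a) \<Rightarrow> 'a \<Rightarrow> 'a" where
  "gs_next n u x = normalize (x - proj n u x)"

lemma gram_schmidt_step:
  assumes u: "orthonormal n u" and x: "x \<notin> tuple_span n u"
  shows "orthonormal (Suc n) (u(Suc n := gs_next n u x))"
    and "tuple_span (Suc n) (u(Suc n := gs_next n u x)) = hspan sm (insert x (u ` {1..n}))"
proof -
  define z where "z = x - proj n u x"
  have z: "z \<noteq> 0"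
    using x proj_in_tuple_span[of n u x] unfolding z_def by auto
  have "ip z (u i) = 0" if "i \<in> {1..n}" for i
    unfolding z_def using u tuple_span_base[OF that] by (rule ip_sub_proj_eq_0)
  with u z show "orthonormal (Suc n) (u(Suc n := gs_next n u x))"
    unfolding gs_next_def z_def[symmetric]
    by (intro orthonormal_fun_upd) (simp_all add: ip_normalize_self ip_normalize_left)
  let ?U = "u ` {1..n}"
  have proj_x: "proj n u x \<in> hspan sm (insert y ?U)" for y
    using proj_in_tuple_span[of n u x] hspan_mono[OF subset_insertI[of ?U y]] by blast
  have "normalize z \<in> hspan sm (insert x ?U)"
    unfolding normalize_def z_def by (intro hspan_sm hspan_diff hspan_base insertI1 proj_x)
  moreover have "proj n u x + sm (of_real (sqrt (sqnorm z))) (normalize z) \<in> hspan sm (insert (normalize z) ?U)"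
    by (intro hspan_add hspan_sm hspan_base insertI1 proj_x)
  then have "x \<in> hspan sm (insert (normalize z) ?U)"
    using sm_sqrt_sqnorm_normalize[OF z] by (simp add: z_def)
  ultimately have "hspan sm (insert (normalize z) ?U) = hspan sm (insert x ?U)"
    by (intro hspan_eqI) (auto intro: hspan_base)
  then show "tuple_span (Suc n) (u(Suc n := gs_next n u x)) = hspan sm (insert x ?U)"
    unfolding image_fun_upd_Suc gs_next_def z_def[symmetric] .
qed

lemma gram_schmidt_extend:
  assumes "finite S" and "orthonormal n u"
  shows "\<exists>n' u'. n \<le> n' \<and> (\<forall>i\<in>{1..n}. u' i = u i) \<and> orthonormal n' u'
           \<and> tuple_span n' u' = hspan sm (u ` {1..n} \<union> S)"
  using assms(1)
proof (induction S rule: finite_induct)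
  case empty
  show ?case
    using assms(2) by auto
next
  case (insert x S)
  then obtain n' u' where IH: "n \<le> n'" "\<forall>i\<in>{1..n}. u' i = u i" "orthonormal n' u'"
    "tuple_span n' u' = hspan sm (u ` {1..n} \<union> S)"
    by blast
  have insert_eq: "u ` {1..n} \<union> insert x S = insert x (u ` {1..n} \<union> S)"
    by auto
  show ?case
  proof (cases "x \<in> tuple_span n' u'")
    case True
    then have "hspan sm (insert x (u ` {1..n} \<union> S)) = hspan sm (u ` {1..n} \<union> S)"
      using IH(4) by (simp add: hspan_insert_eq)
    with IH show ?thesis
      unfolding insert_eq by metis
  next
    case False
    let ?u'' = "u'(Suc n' := gs_next n' u' x)"
    have "tuple_span (Suc n') ?u'' = hspan sm (insert x (u' ` {1..n'}))"
      using gram_schmidt_step(2)[OF IH(3) False] .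
    also have "\<dots> = hspan sm (insert x (u ` {1..n} \<union> S))"
      using IH(4) by (rule hspan_insert_cong)
    finally have "tuple_span (Suc n') ?u'' = hspan sm (u ` {1..n} \<union> insert x S)"
      unfolding insert_eq .
    moreover have "\<forall>i\<in>{1..n}. ?u'' i = u i"
      using IH(1,2) by auto
    ultimately show ?thesis
      using gram_schmidt_step(1)[OF IH(3) False] IH(1) le_SucI by blast
  qed
qed

lemma orthonormal_basis_with_first:
  assumes u: "orthonormal N u" and w: "w \<in> tuple_span N u" and "ip w w = 1"
  shows "\<exists>t. orthonormal N t \<and> t 1 = w \<and> tuple_span N t = tuple_span N u"
proof -
  have "orthonormal 1 (\<lambda>_. w)"
    using \<open>ip w w = 1\<close> unfolding orthonormal_on_def by auto
  from gram_schmidt_extend[OF _ this, of "u ` {1..N}"] obtain n t where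
    t: "1 \<le> n" "t 1 = w" "orthonormal n t" "tuple_span n t = hspan sm (insert w (u ` {1..N}))"
    by auto
  have span_eq: "tuple_span n t = tuple_span N u"
    unfolding t(4) using w by (rule hspan_insert_eq)
  have "n \<le> N"
    using u t(3) by (rule orthonormal_card_le) (metis span_eq tuple_span_base)
  moreover have "N \<le> n"
    using t(3) u by (rule orthonormal_card_le) (metis span_eq tuple_span_base)
  ultimately show ?thesis
    using t span_eq by auto
qed

lemma orthonormal_extend:
  assumes "infinite_dimensional sm" and "orthonormal n u"
  shows "\<exists>u'. orthonormal (n + p) u' \<and> (\<forall>i\<in>{1..n}. u' i = u i)"
proof (induction p)
  case 0
  show ?case
    using assms(2) by auto
next
  case (Suc p)
  then obtain u' where u': "orthonormal (n + p) u'" "\<forall>i\<in>{1..n}. u' i = u i"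
    by blast
  obtain x where "x \<notin> tuple_span (n + p) u'"
    using assms(1) unfolding infinite_dimensional_def by blast
  then have "orthonormal (n + Suc p) (u'(Suc (n + p) := gs_next (n + p) u' x))"
    using gram_schmidt_step(1)[OF u'(1)] by simp
  moreover have "\<forall>i\<in>{1..n}. (u'(Suc (n + p) := gs_next (n + p) u' x)) i = u i"
    using u'(2) by simp
  ultimately show ?case
    by blast
qed

lemma exists_orthonormal: "infinite_dimensional sm \<Longrightarrow> \<exists>u. orthonormal k u"
  using orthonormal_extend[of 0 undefined k] by (auto simp: orthonormal_on_def)

lemma exists_orthonormal_orthogonal:
  assumes "infinite_dimensional sm" and "finite S"
  shows "\<exists>z. orthonormal m z \<and> (\<forall>s\<in>S. \<forall>j\<in>{1..m}. ip s (z j) = 0)"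
proof -
  from gram_schmidt_extend[OF assms(2), of 0 undefined] obtain n b where
    b: "orthonormal n b" "tuple_span n b = hspan sm S"
    by (auto simp: orthonormal_on_def)
  from orthonormal_extend[OF assms(1) b(1), of m] obtain b' where
    b': "orthonormal (n + m) b'" "\<forall>i\<in>{1..n}. b' i = b i"
    by blast
  define z where "z j = b' (n + j)" for j
  have "orthonormal m z"
    using b'(1) unfolding orthonormal_on_def z_def by auto
  moreover have "ip s (z j) = 0" if "s \<in> S" and "j \<in> {1..m}" for s j
  proof (rule ip_hspan_eq_0_left)
    show "s \<in> hspan sm (b' ` {1..n})"
      using b'(2) b(2) that(1) hspan_base[of s S] by (simp add: image_cong[OF refl, of _ b' b])
    fix s' assume "s' \<in> b' ` {1..n}"
    with b'(1) that(2) show "ip s' (z j) = 0"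
      unfolding orthonormal_on_def z_def by auto
  qed
  ultimately show ?thesis
    by blast
qed

end

section \<open>Orthonormal bases of separable spaces\<close>

lemma diagonal_of_nested:
  assumes nested: "\<And>j i. i \<le> m + j \<Longrightarrow> G (Suc j) i = G j i" and "i \<le> m + j"
  shows "G i i = G j i"
proof -
  have stable: "G j' i = G j i" if "j \<le> j'" and "i \<le> m + j" for i j j'
    using that(1) by (induction j' rule: dec_induct) (use that(2) nested in auto)
  show ?thesis
    using stable[of i j i] stable[of j i i] assms(2) by (cases "i \<le> j") auto
qed

lemma eventually_in_increasing_sets:
  fixes d :: "nat \<Rightarrow> 'a" and V :: "nat \<Rightarrow> 'a set"
  assumes mono: "\<And>j. V j \<subseteq> V (Suc j)"
    and escape: "\<And>j. \<exists>k. d k \<notin> V j"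
    and catch: "\<And>j. d (LEAST k. d k \<notin> V j) \<in> V (Suc j)"
  shows "\<exists>j. d k \<in> V j"
proof -
  define esc where "esc j = (LEAST k. d k \<notin> V j)" for j
  have below_in: "d i \<in> V j" if "i < esc j" for i j
    using not_less_Least that unfolding esc_def by blast
  \<comment> \<open>The first index escaping \<open>V j\<close> is caught by \<open>V (Suc j)\<close>, so the first escape strictly increases.\<close>
  have "esc j < esc (Suc j)" for j
  proof -
    have in_next: "d i \<in> V (Suc j)" if "i \<le> esc j" for i
    proof (cases "i = esc j")
      case True
      then show ?thesis
        using catch unfolding esc_def by simp
    next
      case False
      with that below_in[of i j] mono show ?thesis
        by auto
    qed
    have "d (esc (Suc j)) \<notin> V (Suc j)"
      unfolding esc_def using escape by (rule LeastI_ex)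
    with in_next[of "esc (Suc j)"] show ?thesis
      by (cases "esc (Suc j) \<le> esc j") auto
  qed
  then have "k \<le> esc k"
    by (intro strict_mono_imp_increasing strict_monoI_Suc)
  also have "\<dots> < esc (Suc k)"
    by fact
  finally show ?thesis
    using below_in by blast
qed

context inner_space
begin

lemma exists_dense_sequence:
  assumes "hilbert_separable ip"
  shows "\<exists>d::nat \<Rightarrow> 'a. \<forall>x \<epsilon>. 0 < \<epsilon> \<longrightarrow> (\<exists>k. sqnorm (x - d k) < \<epsilon>)"
proof -
  obtain D where D: "countable D" "\<forall>x. \<forall>\<epsilon>>0. \<exists>d\<in>D. hnorm ip (x - d) < \<epsilon>"
    using assms unfolding hilbert_separable_def by blast
  then have "D \<noteq> {}"
    using D(2)[rule_format, of 1 0] by auto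
  show ?thesis
  proof (intro exI[of _ "from_nat_into D"] allI impI)
    fix x and \<epsilon> :: real assume "0 < \<epsilon>"
    then obtain y where "y \<in> D" "sqnorm (x - y) < \<epsilon>"
      using D(2)[rule_format, of "sqrt \<epsilon>" x] by (auto simp: hnorm_eq_sqrt_sqnorm)
    moreover obtain k where "y = from_nat_into D k"
      using \<open>y \<in> D\<close> range_from_nat_into[OF \<open>D \<noteq> {}\<close> D(1)] by blast
    ultimately show "\<exists>k. sqnorm (x - from_nat_into D k) < \<epsilon>"
      by auto
  qed
qed

lemma dense_sequence_escapes_tuple_span:
  fixes d :: "nat \<Rightarrow> 'a"
  assumes "infinite_dimensional sm"
    and dense: "\<And>x \<epsilon>. 0 < \<epsilon> \<Longrightarrow> \<exists>k. sqnorm (x - d k) < \<epsilon>"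
    and v: "orthonormal n v"
  shows "\<exists>k. d k \<notin> tuple_span n v"
proof (rule ccontr)
  assume "\<nexists>k. d k \<notin> tuple_span n v"
  then have "x - proj n v x = 0" for x
    using sqnorm_sub_proj_le[OF v] dense by (intro sqnorm_eq_0_if_small) (meson le_less_trans)
  then have "tuple_span n v = UNIV"
    using proj_in_tuple_span by (metis UNIV_eq_I eq_iff_diff_eq_0)
  with assms(1) show False
    unfolding infinite_dimensional_def by blast
qed

lemma onb_if_spans_dense_sequence:
  fixes d :: "nat \<Rightarrow> 'a"
  assumes e: "orthonormal_on ip {1..} e"
    and dense: "\<And>x \<epsilon>. 0 < \<epsilon> \<Longrightarrow> \<exists>k. sqnorm (x - d k) < \<epsilon>"
    and spans: "\<And>k. \<exists>n. d k \<in> tuple_span n e"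
  shows "onb ip e"
  unfolding onb_def
proof (intro conjI e allI impI)
  fix x assume x: "\<forall>j\<ge>1. ip x (e j) = 0"
  show "x = 0"
  proof (rule sqnorm_eq_0_if_small)
    fix \<epsilon> :: real assume "0 < \<epsilon>"
    then obtain k where k: "sqnorm (x - d k) < \<epsilon>"
      using dense by blast
    obtain n where "d k \<in> tuple_span n e"
      using spans by blast
    then have "ip x (d k) = 0"
      by (rule ip_hspan_eq_0_right[rotated]) (use x in auto)
    then have "ip x (- d k) = 0"
      by (simp add: ip_minus_right)
    then have "sqnorm (x + - d k) = sqnorm x + sqnorm (- d k)"
      by (rule pythagoras)
    with k have "sqnorm x + sqnorm (- d k) < \<epsilon>"
      by simp
    then show "sqnorm x < \<epsilon>"
      using sqnorm_nonneg[of "- d k"] by linarith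
  qed
qed

lemma orthonormal_on_diagonal:
  assumes on: "\<And>j. orthonormal (m + j) (G j)"
    and nested: "\<And>j i. i \<le> m + j \<Longrightarrow> G (Suc j) i = G j i"
  shows "orthonormal_on ip {1..} (\<lambda>i. G i i)"
  unfolding orthonormal_on_def
proof (intro ballI)
  fix i j :: nat assume "i \<in> {1..}" "j \<in> {1..}"
  with on[of "max i j"] show "ip (G i i) (G j j) = (if i = j then 1 else 0)"
    using diagonal_of_nested[where G = G and m = m, OF nested, of i "max i j"]
      diagonal_of_nested[where G = G and m = m, OF nested, of j "max i j"]
    unfolding orthonormal_on_def by auto
qed

lemma greedy_orthonormal_sequence:
  fixes d :: "nat \<Rightarrow> 'a"
  assumes escape: "\<And>n v. orthonormal n v \<Longrightarrow> \<exists>k. d k \<notin> tuple_span n v"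
    and u: "orthonormal m u"
  shows "\<exists>e. orthonormal_on ip {1..} e \<and> (\<forall>i\<in>{1..m}. e i = u i) \<and> (\<forall>k. \<exists>n. d k \<in> tuple_span n e)"
proof -
  define L where "L n v = (LEAST k. d k \<notin> tuple_span n v)" for n v
  define G where "G = rec_nat u (\<lambda>j v. v(Suc (m + j) := gs_next (m + j) v (d (L (m + j) v))))"
  have G_Suc: "G (Suc j) = (G j)(Suc (m + j) := gs_next (m + j) (G j) (d (L (m + j) (G j))))" for j
    by (simp add: G_def)
  have L_out: "d (L n v) \<notin> tuple_span n v" if "orthonormal n v" for n v
    unfolding L_def using escape[OF that] by (rule LeastI_ex)
  have G_on: "orthonormal (m + j) (G j)" for j
  proof (induction j)
    case 0
    with u show ?case
      by (simp add: G_def)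
  next
    case (Suc j)
    show ?case
      unfolding G_Suc add_Suc_right by (rule gram_schmidt_step(1)[OF Suc L_out[OF Suc]])
  qed
  have nested: "G (Suc j) i = G j i" if "i \<le> m + j" for i j
    using that by (simp add: G_Suc)
  have G_span: "tuple_span (m + Suc j) (G (Suc j)) = hspan sm (insert (d (L (m + j) (G j))) (G j ` {1..m + j}))" for j
    using gram_schmidt_step(2)[OF G_on L_out[OF G_on]] by (simp add: G_Suc)
  have "\<exists>j. d k \<in> tuple_span (m + j) (G j)" for k
  proof (rule eventually_in_increasing_sets)
    show "tuple_span (m + j) (G j) \<subseteq> tuple_span (m + Suc j) (G (Suc j))" for j
      unfolding G_span by (rule hspan_mono) auto
    show "\<exists>k. d k \<notin> tuple_span (m + j) (G j)" for j
      using escape[OF G_on] .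
    show "d (LEAST k. d k \<notin> tuple_span (m + j) (G j)) \<in> tuple_span (m + Suc j) (G (Suc j))" for j
      unfolding G_span L_def[symmetric] by (intro hspan_base insertI1)
  qed
  moreover have "tuple_span (m + j) (\<lambda>i. G i i) = tuple_span (m + j) (G j)" for j
    using diagonal_of_nested[where G = G and m = m, OF nested] by (intro arg_cong[of _ _ "hspan sm"] image_cong) auto
  moreover have "G i i = u i" if "i \<in> {1..m}" for i
    using diagonal_of_nested[where G = G and m = m, OF nested, of i 0] that by (simp add: G_def)
  ultimately show ?thesis
    using orthonormal_on_diagonal[OF G_on nested] by metis
qed

lemma orthonormal_extend_onb:
  assumes "infinite_dimensional sm" and "hilbert_separable ip" and "orthonormal m u"
  shows "\<exists>e. onb ip e \<and> (\<forall>i\<in>{1..m}. e i = u i)"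
proof -
  obtain d :: "nat \<Rightarrow> 'a" where dense: "\<And>x \<epsilon>. 0 < \<epsilon> \<Longrightarrow> \<exists>k. sqnorm (x - d k) < \<epsilon>"
    using exists_dense_sequence[OF assms(2)] by blast
  have "\<exists>k. d k \<notin> tuple_span n v" if "orthonormal n v" for n v
    using dense_sequence_escapes_tuple_span[OF assms(1) dense that] .
  then obtain e where e_on: "orthonormal_on ip {1..} e" and e_ext: "\<forall>i\<in>{1..m}. e i = u i"
    and e_spans: "\<forall>k. \<exists>n. d k \<in> tuple_span n e"
    using greedy_orthonormal_sequence[OF _ assms(3)] by blast
  have "onb ip e"
    using e_on dense e_spans[rule_format] by (rule onb_if_spans_dense_sequence)
  with e_ext show ?thesis
    by blast
qed

end

section \<open>Compressions of a self-adjoint operator\<close>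

locale self_adjoint = inner_space +
  fixes A :: "'a \<Rightarrow> 'a"
  assumes self_adjoint: "self_adjoint_op sm ip A"
begin

lemma A_add: "A (x + y) = A x + A y"
  using self_adjoint unfolding self_adjoint_op_def bounded_op_def by blast

lemma A_sm: "A (sm a x) = sm a (A x)"
  using self_adjoint unfolding self_adjoint_op_def bounded_op_def by blast

lemma A_bounded: "\<exists>K. \<forall>x. hnorm ip (A x) \<le> K * hnorm ip x"
proof -
  have "bounded_op sm ip A"
    using self_adjoint by (simp add: self_adjoint_op_def)
  then show ?thesis
    by (simp add: bounded_op_def)
qed

lemma ip_A_left: "ip (A x) y = ip x (A y)"
  using self_adjoint unfolding self_adjoint_op_def by blast

lemma A_zero [simp]: "A 0 = 0"
  using A_sm[of 0 0] by simp

lemma A_sum: "A (\<Sum>i\<in>F. f i) = (\<Sum>i\<in>F. A (f i))"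
  by (induction F rule: infinite_finite_induct) (simp_all add: A_add)

lemma A_lincomb: "A (\<Sum>i\<in>F. sm (a i) (f i)) = (\<Sum>i\<in>F. sm (a i) (A (f i)))"
  by (simp add: A_sum A_sm)

abbreviation qform :: "'a \<Rightarrow> real" where
  "qform x \<equiv> Re (ip (A x) x)"

lemma ip_A_self_real: "ip (A x) x = complex_of_real (qform x)"
proof -
  have "cnj (ip (A x) x) = ip (A x) x"
    by (simp only: ip_commute[of "A x" x, symmetric] ip_A_left)
  then show ?thesis
    by (rule of_real_Re_if_cnj_eq[symmetric])
qed

lemma qform_bounded: "\<exists>K. \<forall>x. \<bar>qform x\<bar> \<le> K * sqnorm x"
proof -
  obtain K where K: "\<And>x. sqrt (sqnorm (A x)) \<le> K * sqrt (sqnorm x)"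
    using A_bounded unfolding hnorm_eq_sqrt_sqnorm by blast
  have "\<bar>qform x\<bar> \<le> \<bar>K\<bar> * sqnorm x" for x
  proof -
    have "sqnorm (A x) = (sqrt (sqnorm (A x)))\<^sup>2"
      by simp
    also have "\<dots> \<le> (K * sqrt (sqnorm x))\<^sup>2"
      by (rule power_mono[OF K]) simp
    also have "\<dots> = K\<^sup>2 * sqnorm x"
      by (simp add: power_mult_distrib)
    finally have A_x: "sqnorm (A x) \<le> K\<^sup>2 * sqnorm x" .
    have "(cmod (ip (A x) x))\<^sup>2 \<le> sqnorm (A x) * sqnorm x"
      by (rule cauchy_schwarz)
    also have "\<dots> \<le> (K\<^sup>2 * sqnorm x) * sqnorm x"
      by (rule mult_right_mono[OF A_x]) simp
    also have "\<dots> = (\<bar>K\<bar> * sqnorm x)\<^sup>2"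
      by (simp add: power_mult_distrib power2_eq_square)
    finally have "cmod (ip (A x) x) \<le> \<bar>K\<bar> * sqnorm x"
      by (rule power2_le_imp_le) simp
    then show ?thesis
      using abs_Re_le_cmod[of "ip (A x) x"] by linarith
  qed
  then show ?thesis
    by blast
qed

text \<open>Eigenvectors of the compression \<open>P\<^sub>U A|\<^sub>U\<close> of \<open>A\<close> to \<open>U\<close>.\<close>

definition comp_eigenvector :: "'a set \<Rightarrow> complex \<Rightarrow> 'a \<Rightarrow> bool" where
  "comp_eigenvector U \<mu> z \<longleftrightarrow> z \<in> U \<and> z \<noteq> 0 \<and> (\<forall>x\<in>U. ip (A z - sm \<mu> z) x = 0)"

lemma comp_eigenvector_eigenvalue: "comp_eigenvector U \<mu> z \<Longrightarrow> ip (A z) z = \<mu> * ip z z"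
  unfolding comp_eigenvector_def by (auto simp: ip_diff_left dest!: bspec[of _ _ z])

definition comp_eigenvalues :: "'a set \<Rightarrow> complex set" where
  "comp_eigenvalues U = {\<mu>. \<exists>z. comp_eigenvector U \<mu> z}"

lemma ip_eq_0_on_tuple_span_iff:
  "(\<forall>x\<in>tuple_span k v. ip y x = 0) \<longleftrightarrow> (\<forall>i<k. ip y (v (Suc i)) = 0)"
proof
  assume "\<forall>x\<in>tuple_span k v. ip y x = 0"
  then show "\<forall>i<k. ip y (v (Suc i)) = 0"
    using tuple_span_base[of _ k v] by simp
next
  assume orth: "\<forall>i<k. ip y (v (Suc i)) = 0"
  have "ip y s = 0" if "s \<in> v ` {1..k}" for s
  proof -
    from that obtain j where "j \<in> {1..k}" "s = v j"
      by blast
    moreover from this(1) obtain i where "j = Suc i"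
      by (cases j) auto
    ultimately show ?thesis
      using orth by simp
  qed
  then show "\<forall>x\<in>tuple_span k v. ip y x = 0"
    using ip_hspan_eq_0_right by blast
qed

lemma ip_A_tuple_span_coordinate:
  assumes v: "orthonormal k v" and z: "z \<in> tuple_span k v"
  shows "ip (A z) (v (Suc i)) = (\<Sum>j<k. compression ip A v i j * ip z (v (Suc j)))"
proof -
  have "ip (A z) (v (Suc i)) = (\<Sum>j\<in>{1..k}. ip (A (v j)) (v (Suc i)) * ip z (v j))"
    by (subst tuple_span_eq_lincomb[OF v z])
      (simp add: A_lincomb ip_sum_left mult.commute)
  also have "\<dots> = (\<Sum>j<k. ip (A (v (Suc j))) (v (Suc i)) * ip z (v (Suc j)))"
    by (rule sum_bounds_lt_plus1[symmetric])
  finally show ?thesis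
    by (simp add: compression_def)
qed

lemma comp_eigenvector_iff_coordinates:
  assumes v: "orthonormal k v" and z: "z \<in> tuple_span k v"
  shows "comp_eigenvector (tuple_span k v) \<mu> z \<longleftrightarrow> (\<exists>i<k. ip z (v (Suc i)) \<noteq> 0) \<and>
           (\<forall>i<k. (\<Sum>j<k. compression ip A v i j * ip z (v (Suc j))) = \<mu> * ip z (v (Suc i)))"
proof -
  have "(\<forall>x\<in>tuple_span k v. ip (A z - sm \<mu> z) x = 0) \<longleftrightarrow>
      (\<forall>i<k. (\<Sum>j<k. compression ip A v i j * ip z (v (Suc j))) = \<mu> * ip z (v (Suc i)))"
    unfolding ip_eq_0_on_tuple_span_iff using ip_A_tuple_span_coordinate[OF v z]
    by (simp add: ip_diff_left)
  moreover have "z \<noteq> 0 \<longleftrightarrow> (\<exists>i<k. ip z (v (Suc i)) \<noteq> 0)"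
    using ip_eq_0_on_tuple_span_iff[of v k z] z ip_self_eq_0[of z] by auto
  ultimately show ?thesis
    unfolding comp_eigenvector_def using z by blast
qed

lemma mat_eigenvalue_compression_iff:
  assumes v: "orthonormal k v"
  shows "mat_eigenvalue k (compression ip A v) \<mu> \<longleftrightarrow> \<mu> \<in> comp_eigenvalues (tuple_span k v)"
proof
  assume "mat_eigenvalue k (compression ip A v) \<mu>"
  then obtain a where a: "\<exists>i<k. a i \<noteq> 0" "\<forall>i<k. (\<Sum>j<k. compression ip A v i j * a j) = \<mu> * a i"
    unfolding mat_eigenvalue_def by blast
  define z where "z = (\<Sum>j\<in>{1..k}. sm (a (j - 1)) (v j))"
  have z: "z \<in> tuple_span k v"
    unfolding z_def by (rule tuple_span_lincomb)
  have "ip z (v (Suc i)) = a i" if "i < k" for i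
    using ip_lincomb_orthonormal[OF v, of "Suc i" "\<lambda>j. a (j - 1)"] that by (simp add: z_def)
  with a have "comp_eigenvector (tuple_span k v) \<mu> z"
    unfolding comp_eigenvector_iff_coordinates[OF v z] by auto
  then show "\<mu> \<in> comp_eigenvalues (tuple_span k v)"
    unfolding comp_eigenvalues_def by blast
next
  assume "\<mu> \<in> comp_eigenvalues (tuple_span k v)"
  then obtain z where "comp_eigenvector (tuple_span k v) \<mu> z"
    unfolding comp_eigenvalues_def by blast
  moreover from this have "z \<in> tuple_span k v"
    unfolding comp_eigenvector_def by blast
  ultimately have "(\<exists>i<k. ip z (v (Suc i)) \<noteq> 0) \<and>
      (\<forall>i<k. (\<Sum>j<k. compression ip A v i j * ip z (v (Suc j))) = \<mu> * ip z (v (Suc i)))"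
    using comp_eigenvector_iff_coordinates[OF v] by blast
  then show "mat_eigenvalue k (compression ip A v) \<mu>"
    unfolding mat_eigenvalue_def by (rule exI[of _ "\<lambda>i. ip z (v (Suc i))"])
qed

lemma comp_eigenvalues_tuple_span:
  "orthonormal k v \<Longrightarrow> comp_eigenvalues (tuple_span k v) = {\<mu>. mat_eigenvalue k (compression ip A v) \<mu>}"
  using mat_eigenvalue_compression_iff by blast

lemma finite_comp_eigenvalues: "orthonormal k v \<Longrightarrow> finite (comp_eigenvalues (tuple_span k v))"
  by (subst comp_eigenvalues_tuple_span) (simp_all add: finite_mat_eigenvalues)

lemma comp_eigenvalues_nonempty: "orthonormal k v \<Longrightarrow> 0 < k \<Longrightarrow> comp_eigenvalues (tuple_span k v) \<noteq> {}"
  by (subst comp_eigenvalues_tuple_span) (simp_all add: mat_eigenvalue_exists)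

lemma smallest_eigenvalue_compression:
  "orthonormal k v \<Longrightarrow> smallest_eigenvalue k (compression ip A v) = Min (Re ` comp_eigenvalues (tuple_span k v))"
  unfolding smallest_eigenvalue_def by (subst comp_eigenvalues_tuple_span) (simp_all add: image_Collect)

lemma comp_eigenvector_sm:
  assumes z: "comp_eigenvector (hspan sm S) \<mu> z" and "c \<noteq> 0"
  shows "comp_eigenvector (hspan sm S) \<mu> (sm c z)"
proof -
  have "sm (1 / c) (sm c z) = z"
    using \<open>c \<noteq> 0\<close> by simp
  then have "sm c z \<noteq> 0"
    using z unfolding comp_eigenvector_def by force
  moreover have "A (sm c z) - sm \<mu> (sm c z) = sm c (A z - sm \<mu> z)"
    by (simp add: A_sm sm_diff_right mult.commute)
  ultimately show ?thesis
    using z unfolding comp_eigenvector_def by (simp add: hspan_sm)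
qed

lemma peel_eigenvector:
  assumes v: "orthonormal (Suc k) v" and \<mu>: "\<mu> \<in> comp_eigenvalues (tuple_span (Suc k) v)"
  shows "\<exists>t. orthonormal (Suc k) t \<and> tuple_span (Suc k) t = tuple_span (Suc k) v
           \<and> comp_eigenvector (tuple_span (Suc k) v) \<mu> (t 1)"
proof -
  obtain z where z: "comp_eigenvector (tuple_span (Suc k) v) \<mu> z"
    using \<mu> unfolding comp_eigenvalues_def by blast
  then have "z \<noteq> 0" and "normalize z \<in> tuple_span (Suc k) v"
    unfolding comp_eigenvector_def normalize_def by (simp_all add: hspan_sm)
  moreover have "comp_eigenvector (tuple_span (Suc k) v) \<mu> (normalize z)"
    unfolding normalize_def using z \<open>z \<noteq> 0\<close> by (intro comp_eigenvector_sm) (simp_all add: sqnorm_pos)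
  ultimately show ?thesis
    using orthonormal_basis_with_first[OF v, of "normalize z"] by (auto simp: ip_normalize_self)
qed

lemma peel_tail_orthogonal:
  assumes t: "orthonormal (Suc k) t"
    and eig: "comp_eigenvector (tuple_span (Suc k) t) \<mu> (t 1)"
    and y: "y \<in> tuple_span k (\<lambda>j. t (Suc j))"
  shows "ip y (t 1) = 0" and "ip (A y) (t 1) = 0"
proof -
  show y_t1: "ip y (t 1) = 0"
    using y by (rule ip_hspan_eq_0_left[rotated]) (use t in \<open>auto simp: orthonormal_on_def\<close>)
  have "y \<in> tuple_span (Suc k) t"
    using y tuple_span_tail_subset by blast
  with eig have "ip (A (t 1) - sm \<mu> (t 1)) y = 0"
    unfolding comp_eigenvector_def by blast
  moreover have "ip (t 1) y = 0"
    using y_t1 ip_eq_0_commute by blast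
  ultimately have "ip (A (t 1)) y = 0"
    by (simp add: ip_diff_left)
  then show "ip (A y) (t 1) = 0"
    using ip_commute[of "A y" "t 1"] ip_A_left[of "t 1" y] by simp
qed

lemma peel_decomposition:
  assumes t: "orthonormal (Suc k) t"
    and eig: "comp_eigenvector (tuple_span (Suc k) t) \<mu> (t 1)"
    and x: "x \<in> tuple_span (Suc k) t"
  defines "y \<equiv> x - sm (ip x (t 1)) (t 1)"
  shows "y \<in> tuple_span k (\<lambda>j. t (Suc j))"
    and "qform x = (cmod (ip x (t 1)))\<^sup>2 * Re \<mu> + qform y"
    and "sqnorm x = (cmod (ip x (t 1)))\<^sup>2 + sqnorm y"
proof -
  define c where "c = ip x (t 1)"
  have "x = sm c (t 1) + (\<Sum>j\<in>{1..k}. sm (ip x (t (Suc j))) (t (Suc j)))"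
    using tuple_span_eq_lincomb[OF t x] unfolding sum_atLeast1_atMost_Suc c_def .
  then have "y = (\<Sum>j\<in>{1..k}. sm (ip x (t (Suc j))) (t (Suc j)))"
    unfolding y_def c_def[symmetric] by (metis add_diff_cancel_left')
  then show y_tail: "y \<in> tuple_span k (\<lambda>j. t (Suc j))"
    using tuple_span_lincomb[of "\<lambda>j. ip x (t (Suc j))" "\<lambda>j. t (Suc j)" k] by simp
  have x_eq: "x = sm c (t 1) + y"
    unfolding y_def c_def by simp
  have "ip (A (t 1)) (t 1) = \<mu>"
    using comp_eigenvector_eigenvalue[OF eig] orthonormal_ip[OF t, of 1 1] by simp
  then have \<mu>: "ip (A (t 1)) (t 1) = of_real (Re \<mu>)"
    by (metis Re_complex_of_real ip_A_self_real)
  have orth: "ip y (t 1) = 0" "ip (A y) (t 1) = 0" "ip (t 1) y = 0" "ip (A (t 1)) y = 0"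
    using peel_tail_orthogonal[OF t eig y_tail] ip_eq_0_commute ip_A_left[of "t 1" y] by auto
  have "ip (A x) x = c * cnj c * ip (A (t 1)) (t 1) + c * ip (A (t 1)) y + cnj c * ip (A y) (t 1) + ip (A y) y"
    unfolding x_eq by (simp add: A_add A_sm ip_add_left ip_add_right algebra_simps)
  also have "\<dots> = of_real ((cmod c)\<^sup>2 * Re \<mu>) + ip (A y) y"
    using orth \<mu> by (simp add: complex_norm_square del: of_real_power)
  finally show "qform x = (cmod (ip x (t 1)))\<^sup>2 * Re \<mu> + qform y"
    by (simp add: c_def)
  have "sqnorm x = sqnorm (sm c (t 1)) + sqnorm y"
    unfolding x_eq using orth by (intro pythagoras) simp
  then show "sqnorm x = (cmod (ip x (t 1)))\<^sup>2 + sqnorm y"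
    using orthonormal_sqnorm[OF t, of 1] by (simp add: sqnorm_sm c_def)
qed

lemma comp_eigenvalues_tail_subset:
  assumes t: "orthonormal (Suc k) t"
    and eig: "comp_eigenvector (tuple_span (Suc k) t) \<mu> (t 1)"
  shows "comp_eigenvalues (tuple_span k (\<lambda>j. t (Suc j))) \<subseteq> comp_eigenvalues (tuple_span (Suc k) t)"
proof
  fix \<nu> assume "\<nu> \<in> comp_eigenvalues (tuple_span k (\<lambda>j. t (Suc j)))"
  then obtain z where z: "z \<in> tuple_span k (\<lambda>j. t (Suc j))" "z \<noteq> 0"
    "\<forall>x\<in>tuple_span k (\<lambda>j. t (Suc j)). ip (A z - sm \<nu> z) x = 0"
    unfolding comp_eigenvalues_def comp_eigenvector_def by blast
  have span_eq: "tuple_span (Suc k) t = hspan sm (insert (t 1) ((\<lambda>j. t (Suc j)) ` {1..k}))"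
    unfolding image_atLeast1_atMost_Suc ..
  have "ip (A z - sm \<nu> z) x = 0" if "x \<in> tuple_span (Suc k) t" for x
  proof (rule ip_hspan_eq_0_right)
    show "x \<in> hspan sm (insert (t 1) ((\<lambda>j. t (Suc j)) ` {1..k}))"
      using that span_eq by simp
    fix s assume "s \<in> insert (t 1) ((\<lambda>j. t (Suc j)) ` {1..k})"
    then show "ip (A z - sm \<nu> z) s = 0"
      using z peel_tail_orthogonal[OF t eig z(1)] hspan_base by (auto simp: ip_diff_left)
  qed
  moreover have "z \<in> tuple_span (Suc k) t"
    using z(1) tuple_span_tail_subset by blast
  ultimately show "\<nu> \<in> comp_eigenvalues (tuple_span (Suc k) t)"
    unfolding comp_eigenvalues_def comp_eigenvector_def using z(2) by blast
qed

lemma rayleigh_bounds: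
  assumes "orthonormal k v" and "x \<in> tuple_span k v"
    and "\<And>\<mu>. \<mu> \<in> comp_eigenvalues (tuple_span k v) \<Longrightarrow> lo \<le> Re \<mu> \<and> Re \<mu> \<le> hi"
  shows "lo * sqnorm x \<le> qform x \<and> qform x \<le> hi * sqnorm x"
  using assms
proof (induction k arbitrary: v x)
  case 0
  then show ?case
    by (simp add: hspan_empty)
next
  case (Suc k)
  obtain \<mu> where \<mu>: "\<mu> \<in> comp_eigenvalues (tuple_span (Suc k) v)"
    using comp_eigenvalues_nonempty[OF Suc.prems(1)] by blast
  obtain t where t: "orthonormal (Suc k) t" "tuple_span (Suc k) t = tuple_span (Suc k) v"
    and eig: "comp_eigenvector (tuple_span (Suc k) t) \<mu> (t 1)"
    using peel_eigenvector[OF Suc.prems(1) \<mu>] by auto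
  define c where "c = (cmod (ip x (t 1)))\<^sup>2"
  define y where "y = x - sm (ip x (t 1)) (t 1)"
  have "x \<in> tuple_span (Suc k) t"
    using Suc.prems(2) t(2) by simp
  note dec = peel_decomposition[OF t(1) eig this, folded y_def c_def]
  have "lo * sqnorm y \<le> qform y \<and> qform y \<le> hi * sqnorm y"
    using comp_eigenvalues_tail_subset[OF t(1) eig] t(2) Suc.prems(3)
    by (intro Suc.IH[OF orthonormal_shift[OF t(1)] dec(1)]) auto
  moreover have "lo * c \<le> Re \<mu> * c" "Re \<mu> * c \<le> hi * c"
    using Suc.prems(3)[OF \<mu>] by (simp_all add: mult_right_mono c_def)
  moreover have "lo * sqnorm x = lo * c + lo * sqnorm y" "hi * sqnorm x = hi * c + hi * sqnorm y"
    "qform x = Re \<mu> * c + qform y"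
    using dec(2,3) by (simp_all add: distrib_left)
  ultimately show ?case
    by linarith
qed

lemma rayleigh_min_max:
  assumes "orthonormal k v" and "x \<in> tuple_span k v"
  shows "Min (Re ` comp_eigenvalues (tuple_span k v)) * sqnorm x \<le> qform x"
    and "qform x \<le> Max (Re ` comp_eigenvalues (tuple_span k v)) * sqnorm x"
proof -
  let ?ev = "Re ` comp_eigenvalues (tuple_span k v)"
  have "Min ?ev * sqnorm x \<le> qform x \<and> qform x \<le> Max ?ev * sqnorm x"
    using finite_comp_eigenvalues[OF assms(1)] by (intro rayleigh_bounds[OF assms]) simp
  then show "Min ?ev * sqnorm x \<le> qform x" and "qform x \<le> Max ?ev * sqnorm x"
    by simp_all
qed

section \<open>Ky Fan inequalities\<close>

lemma sum_qform_eq_if_same_span: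
  assumes u: "orthonormal n u" and z: "orthonormal n z" and span: "tuple_span n u = tuple_span n z"
  shows "(\<Sum>i\<in>{1..n}. qform (u i)) = (\<Sum>i\<in>{1..n}. qform (z i))"
proof -
  \<comment> \<open>Both sums equal the double sum of \<open>ip (z l) (u i) * ip (A (u i)) (z l)\<close>, a basis-free trace.\<close>
  have u_side: "ip (A (u i)) (u i) = (\<Sum>l\<in>{1..n}. ip (z l) (u i) * ip (A (u i)) (z l))"
    if "i \<in> {1..n}" for i
  proof -
    have "u i \<in> tuple_span n z"
      using tuple_span_base[OF that, of u] span by simp
    then have "ip (A (u i)) (u i) = (\<Sum>l\<in>{1..n}. cnj (ip (u i) (z l)) * ip (A (u i)) (z l))"
      by (subst (2) tuple_span_eq_lincomb[OF z]) (simp_all add: ip_sum_right)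
    then show ?thesis
      by (simp add: ip_commute[of "z _" "u i"])
  qed
  have z_side: "ip (A (z l)) (z l) = (\<Sum>i\<in>{1..n}. ip (z l) (u i) * ip (A (u i)) (z l))"
    if "l \<in> {1..n}" for l
  proof -
    have "z l \<in> tuple_span n u"
      using tuple_span_base[OF that, of z] span by simp
    then show ?thesis
      by (subst (1) tuple_span_eq_lincomb[OF u]) (simp_all add: A_lincomb ip_sum_left)
  qed
  have "(\<Sum>i\<in>{1..n}. ip (A (u i)) (u i))
      = (\<Sum>i\<in>{1..n}. \<Sum>l\<in>{1..n}. ip (z l) (u i) * ip (A (u i)) (z l))"
    by (rule sum.cong) (simp_all add: u_side)
  also have "\<dots> = (\<Sum>l\<in>{1..n}. \<Sum>i\<in>{1..n}. ip (z l) (u i) * ip (A (u i)) (z l))"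
    by (rule sum.swap)
  also have "\<dots> = (\<Sum>l\<in>{1..n}. ip (A (z l)) (z l))"
    by (rule sum.cong) (simp_all add: z_side)
  finally show ?thesis
    by (metis Re_sum)
qed

lemma bdd_above_smallest_eigenvalues:
  "bdd_above {smallest_eigenvalue k (compression ip A v) |v. orthonormal k v}"
proof (cases "k = 0")
  case True
  then show ?thesis
    by (simp add: smallest_eigenvalue_def mat_eigenvalue_def)
next
  case False
  obtain K where K: "\<And>x. \<bar>qform x\<bar> \<le> K * sqnorm x"
    using qform_bounded by blast
  have "smallest_eigenvalue k (compression ip A w) \<le> K" if w: "orthonormal k w" for w
  proof -
    have one: "1 \<in> {1..k}"
      using False by simp
    then have "Min (Re ` comp_eigenvalues (tuple_span k w)) \<le> qform (w 1)"
      using rayleigh_min_max(1)[OF w tuple_span_base[OF one]] orthonormal_sqnorm[OF w one] by simp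
    also have "\<dots> \<le> K"
      using K[of "w 1"] orthonormal_sqnorm[OF w one] by simp
    finally show ?thesis
      by (simp add: smallest_eigenvalue_compression[OF w])
  qed
  then show ?thesis
    by (intro bdd_aboveI[where M = K]) auto
qed

lemma smallest_eigenvalue_le_lambda_k:
  "orthonormal k v \<Longrightarrow> smallest_eigenvalue k (compression ip A v) \<le> lambda_k ip A k"
  unfolding lambda_k_def by (rule cSup_upper[OF _ bdd_above_smallest_eigenvalues]) blast

lemma bdd_above_unit_qform: "bdd_above {qform x |x. x \<in> U \<and> hnorm ip x = 1}"
proof -
  obtain K where K: "\<And>x. \<bar>qform x\<bar> \<le> K * sqnorm x"
    using qform_bounded by blast
  have "qform x \<le> K" if "hnorm ip x = 1" for x
    using K[of x] that by (simp add: hnorm_eq_1_iff)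
  then show ?thesis
    by (intro bdd_aboveI[where M = K]) auto
qed

lemma bdd_below_nu_k_set:
  assumes "0 < k"
  shows "bdd_below {Sup {qform x |x. x \<in> tuple_span k v \<and> hnorm ip x = 1} |v. lin_indep_tuple sm k v}"
proof -
  obtain K where K: "\<And>x. \<bar>qform x\<bar> \<le> K * sqnorm x"
    using qform_bounded by blast
  have "- K \<le> Sup {qform x |x. x \<in> tuple_span k v \<and> hnorm ip x = 1}" if v: "lin_indep_tuple sm k v" for v
  proof -
    obtain x where x: "x \<in> tuple_span k v" "hnorm ip x = 1"
      using exists_unit_in_tuple_span[OF v assms] by blast
    then have "- K \<le> qform x"
      using K[of x] by (simp add: hnorm_eq_1_iff)
    also have "\<dots> \<le> Sup {qform x |x. x \<in> tuple_span k v \<and> hnorm ip x = 1}"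
      using x by (intro cSup_upper bdd_above_unit_qform) blast
    finally show ?thesis .
  qed
  then show ?thesis
    by (intro bdd_belowI[where m = "- K"]) auto
qed

lemma nu_k_le_max_eigenvalue:
  assumes u: "orthonormal k u" and "0 < k"
  shows "nu_k sm ip A k \<le> Max (Re ` comp_eigenvalues (tuple_span k u))"
proof -
  have "nu_k sm ip A k \<le> Sup {qform x |x. x \<in> tuple_span k u \<and> hnorm ip x = 1}"
    unfolding nu_k_def using orthonormal_lin_indep[OF u]
    by (intro cInf_lower bdd_below_nu_k_set[OF \<open>0 < k\<close>]) blast
  also have "\<dots> \<le> Max (Re ` comp_eigenvalues (tuple_span k u))"
  proof (rule cSup_least)
    show "{qform x |x. x \<in> tuple_span k u \<and> hnorm ip x = 1} \<noteq> {}"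
      using exists_unit_in_tuple_span[OF orthonormal_lin_indep[OF u] \<open>0 < k\<close>] by blast
    fix r assume "r \<in> {qform x |x. x \<in> tuple_span k u \<and> hnorm ip x = 1}"
    then obtain x where x: "r = qform x" "x \<in> tuple_span k u" "sqnorm x = 1"
      by (auto simp: hnorm_eq_1_iff)
    with rayleigh_min_max(2)[OF u x(2)] show "r \<le> Max (Re ` comp_eigenvalues (tuple_span k u))"
      by simp
  qed
  finally show ?thesis .
qed

lemma sum_qform_le_sum_lambda_k:
  "orthonormal k u \<Longrightarrow> (\<Sum>i\<in>{1..k}. qform (u i)) \<le> (\<Sum>j\<in>{1..k}. lambda_k ip A j)"
proof (induction k arbitrary: u)
  case 0
  then show ?case
    by simp
next
  case (Suc k)
  \<comment> \<open>Peel off an eigenvector for the smallest eigenvalue of the compression.\<close>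
  let ?ev = "Re ` comp_eigenvalues (tuple_span (Suc k) u)"
  obtain \<mu> where \<mu>: "\<mu> \<in> comp_eigenvalues (tuple_span (Suc k) u)" "Re \<mu> = Min ?ev"
    using Min_in[of ?ev] finite_comp_eigenvalues[OF Suc.prems] comp_eigenvalues_nonempty[OF Suc.prems]
    by fastforce
  obtain t where t: "orthonormal (Suc k) t" "tuple_span (Suc k) t = tuple_span (Suc k) u"
    and eig: "comp_eigenvector (tuple_span (Suc k) u) \<mu> (t 1)"
    using peel_eigenvector[OF Suc.prems \<mu>(1)] by blast
  have "qform (t 1) = Re \<mu>"
    using comp_eigenvector_eigenvalue[OF eig] orthonormal_ip[OF t(1), of 1 1] by simp
  also have "\<dots> \<le> lambda_k ip A (Suc k)"
    using \<mu>(2) smallest_eigenvalue_le_lambda_k[OF Suc.prems] smallest_eigenvalue_compression[OF Suc.prems]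
    by simp
  finally have "qform (t 1) + (\<Sum>i\<in>{1..k}. qform (t (Suc i))) \<le> lambda_k ip A (Suc k) + (\<Sum>j\<in>{1..k}. lambda_k ip A j)"
    using Suc.IH[OF orthonormal_shift[OF t(1)]] by linarith
  moreover have "(\<Sum>i\<in>{1..Suc k}. qform (u i)) = (\<Sum>i\<in>{1..Suc k}. qform (t i))"
    using sum_qform_eq_if_same_span[OF Suc.prems t(1) t(2)[symmetric]] .
  moreover have "(\<Sum>i\<in>{1..Suc k}. qform (t i)) = qform (t 1) + (\<Sum>i\<in>{1..k}. qform (t (Suc i)))"
    by (rule sum_atLeast1_atMost_Suc)
  moreover have "(\<Sum>j\<in>{1..Suc k}. lambda_k ip A j) = lambda_k ip A (Suc k) + (\<Sum>j\<in>{1..k}. lambda_k ip A j)"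
    by simp
  ultimately show ?case
    by linarith
qed

lemma sum_nu_k_le_sum_qform:
  "orthonormal k u \<Longrightarrow> (\<Sum>j\<in>{1..k}. nu_k sm ip A j) \<le> (\<Sum>i\<in>{1..k}. qform (u i))"
proof (induction k arbitrary: u)
  case 0
  then show ?case
    by simp
next
  case (Suc k)
  \<comment> \<open>Peel off an eigenvector for the largest eigenvalue of the compression.\<close>
  let ?ev = "Re ` comp_eigenvalues (tuple_span (Suc k) u)"
  obtain \<mu> where \<mu>: "\<mu> \<in> comp_eigenvalues (tuple_span (Suc k) u)" "Re \<mu> = Max ?ev"
    using Max_in[of ?ev] finite_comp_eigenvalues[OF Suc.prems] comp_eigenvalues_nonempty[OF Suc.prems]
    by fastforce
  obtain t where t: "orthonormal (Suc k) t" "tuple_span (Suc k) t = tuple_span (Suc k) u"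
    and eig: "comp_eigenvector (tuple_span (Suc k) u) \<mu> (t 1)"
    using peel_eigenvector[OF Suc.prems \<mu>(1)] by blast
  have "nu_k sm ip A (Suc k) \<le> Re \<mu>"
    using \<mu>(2) nu_k_le_max_eigenvalue[OF Suc.prems] by simp
  also have "\<dots> = qform (t 1)"
    using comp_eigenvector_eigenvalue[OF eig] orthonormal_ip[OF t(1), of 1 1] by simp
  finally have "nu_k sm ip A (Suc k) + (\<Sum>j\<in>{1..k}. nu_k sm ip A j) \<le> qform (t 1) + (\<Sum>i\<in>{1..k}. qform (t (Suc i)))"
    using Suc.IH[OF orthonormal_shift[OF t(1)]] by linarith
  moreover have "(\<Sum>i\<in>{1..Suc k}. qform (u i)) = (\<Sum>i\<in>{1..Suc k}. qform (t i))"
    using sum_qform_eq_if_same_span[OF Suc.prems t(1) t(2)[symmetric]] .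
  moreover have "(\<Sum>i\<in>{1..Suc k}. qform (t i)) = qform (t 1) + (\<Sum>i\<in>{1..k}. qform (t (Suc i)))"
    by (rule sum_atLeast1_atMost_Suc)
  moreover have "(\<Sum>j\<in>{1..Suc k}. nu_k sm ip A j) = nu_k sm ip A (Suc k) + (\<Sum>j\<in>{1..k}. nu_k sm ip A j)"
    by simp
  ultimately show ?case
    by linarith
qed

lemma exists_orthonormal_near_lambda_k:
  assumes inf: "infinite_dimensional sm" and "0 < \<epsilon>"
  shows "\<exists>u. orthonormal m u \<and> (\<forall>k\<in>{1..m}. lambda_k ip A k - \<epsilon> < qform (u k))"
proof (induction m)
  case 0
  then show ?case
    by (auto simp: orthonormal_on_def)
next
  case (Suc m)
  then obtain u where u: "orthonormal m u" "\<forall>k\<in>{1..m}. lambda_k ip A k - \<epsilon> < qform (u k)"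
    by blast
  let ?L = "{smallest_eigenvalue (Suc m) (compression ip A v) |v. orthonormal (Suc m) v}"
  have "?L \<noteq> {}"
    using exists_orthonormal[OF inf] by blast
  moreover have "lambda_k ip A (Suc m) - \<epsilon> < Sup ?L"
    unfolding lambda_k_def using \<open>0 < \<epsilon>\<close> by simp
  ultimately obtain v where v: "orthonormal (Suc m) v"
    "lambda_k ip A (Suc m) - \<epsilon> < smallest_eigenvalue (Suc m) (compression ip A v)"
    using less_cSup_iff[OF _ bdd_above_smallest_eigenvalues] by auto
  obtain e where e: "e \<in> tuple_span (Suc m) v" "sqnorm e = 1" "orthonormal (Suc m) (u(Suc m := e))"
    using orthonormal_extend_within[OF u(1) orthonormal_lin_indep[OF v(1)]] by blast
  have "smallest_eigenvalue (Suc m) (compression ip A v) \<le> qform e"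
    using rayleigh_min_max(1)[OF v(1) e(1)] e(2) by (simp add: smallest_eigenvalue_compression[OF v(1)])
  with u(2) v(2) have "\<forall>k\<in>{1..Suc m}. lambda_k ip A k - \<epsilon> < qform ((u(Suc m := e)) k)"
    by (auto simp: le_Suc_eq)
  with e(3) show ?case
    by blast
qed

lemma exists_orthonormal_near_nu_k:
  assumes inf: "infinite_dimensional sm" and "0 < \<epsilon>"
  shows "\<exists>u. orthonormal m u \<and> (\<forall>k\<in>{1..m}. qform (u k) < nu_k sm ip A k + \<epsilon>)"
proof (induction m)
  case 0
  then show ?case
    by (auto simp: orthonormal_on_def)
next
  case (Suc m)
  then obtain u where u: "orthonormal m u" "\<forall>k\<in>{1..m}. qform (u k) < nu_k sm ip A k + \<epsilon>"
    by blast
  let ?S = "\<lambda>v. {qform x |x. x \<in> tuple_span (Suc m) v \<and> hnorm ip x = 1}"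
  let ?N = "{Sup (?S v) |v. lin_indep_tuple sm (Suc m) v}"
  have "?N \<noteq> {}"
    using exists_orthonormal[OF inf] orthonormal_lin_indep by blast
  moreover have "Inf ?N < nu_k sm ip A (Suc m) + \<epsilon>"
    unfolding nu_k_def using \<open>0 < \<epsilon>\<close> by simp
  ultimately obtain v where v: "lin_indep_tuple sm (Suc m) v" "Sup (?S v) < nu_k sm ip A (Suc m) + \<epsilon>"
    using cInf_less_iff[OF _ bdd_below_nu_k_set] by auto
  obtain e where e: "e \<in> tuple_span (Suc m) v" "sqnorm e = 1" "orthonormal (Suc m) (u(Suc m := e))"
    using orthonormal_extend_within[OF u(1) v(1)] by blast
  have "qform e \<le> Sup (?S v)"
    using e(1,2) by (intro cSup_upper bdd_above_unit_qform) (auto simp: hnorm_eq_1_iff)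
  with u(2) v(2) have "\<forall>k\<in>{1..Suc m}. qform ((u(Suc m := e)) k) < nu_k sm ip A k + \<epsilon>"
    by (auto simp: le_Suc_eq)
  with e(3) show ?case
    by blast
qed

end

section \<open>Decreasing weights\<close>

lemma summation_by_parts:
  fixes c a :: "nat \<Rightarrow> real"
  shows "(\<Sum>j\<in>{1..m}. c j * a j)
       = (\<Sum>k\<in>{1..m}. (c k - c (Suc k)) * (\<Sum>j\<in>{1..k}. a j)) + c (Suc m) * (\<Sum>j\<in>{1..m}. a j)"
  by (induction m) (simp_all add: algebra_simps)

lemma weighted_sum_le_if_partial_sums_le:
  fixes c a b :: "nat \<Rightarrow> real"
  assumes partial: "\<And>k. k \<in> {1..m} \<Longrightarrow> (\<Sum>j\<in>{1..k}. a j) \<le> (\<Sum>j\<in>{1..k}. b j)"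
    and decreasing: "\<And>k. k \<in> {1..m} \<Longrightarrow> c (Suc k) \<le> c k" and "0 \<le> c (Suc m)"
  shows "(\<Sum>j\<in>{1..m}. c j * a j) \<le> (\<Sum>j\<in>{1..m}. c j * b j)"
proof -
  have "0 \<le> (\<Sum>k\<in>{1..m}. (c k - c (Suc k)) * (\<Sum>j\<in>{1..k}. b j - a j))"
  proof (rule sum_nonneg)
    fix k assume "k \<in> {1..m}"
    then show "0 \<le> (c k - c (Suc k)) * (\<Sum>j\<in>{1..k}. b j - a j)"
      using partial[of k] decreasing[of k] by (intro mult_nonneg_nonneg) (simp_all add: sum_subtractf)
  qed
  moreover have "0 \<le> c (Suc m) * (\<Sum>j\<in>{1..m}. b j - a j)"
    using partial[of m] \<open>0 \<le> c (Suc m)\<close> by (cases "m = 0") (simp_all add: sum_subtractf)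
  ultimately have "0 \<le> (\<Sum>j\<in>{1..m}. c j * (b j - a j))"
    using summation_by_parts[of c "\<lambda>j. b j - a j" m] by linarith
  then show ?thesis
    by (simp add: algebra_simps sum_subtractf)
qed

lemma antimono_if_decreasing_steps:
  fixes c :: "nat \<Rightarrow> 'a::order"
  assumes steps: "\<And>k. i \<le> k \<Longrightarrow> k < j \<Longrightarrow> c (Suc k) \<le> c k" and "i \<le> j"
  shows "c j \<le> c i"
  using assms(2)
proof (induction j rule: dec_induct)
  case (step n)
  then show ?case
    using steps[of n] order_trans by blast
qed simp

lemma decreasing_weights_nonneg:
  fixes c :: "nat \<Rightarrow> real"
  assumes "\<And>k. k \<in> {1..m} \<Longrightarrow> c (Suc k) \<le> c k" and "0 \<le> c (Suc m)" and "j \<in> {1..m}"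
  shows "0 \<le> c j"
proof -
  have "c (Suc m) \<le> c j"
    by (rule antimono_if_decreasing_steps) (use assms(1,3) in auto)
  with assms(2) show ?thesis
    by linarith
qed

lemma decreasing_finite_support:
  fixes c :: "nat \<Rightarrow> real"
  assumes decreasing: "\<forall>j\<ge>1. c (Suc j) \<le> c j" and finite: "finite {j. 1 \<le> j \<and> c j \<noteq> 0}"
  obtains m where "{j. 1 \<le> j \<and> c j \<noteq> 0} = {1..m}" and "c (Suc m) = 0"
proof -
  define S where "S = {j. 1 \<le> j \<and> c j \<noteq> 0}"
  define m where "m = Max (insert 0 S)"
  have fin: "finite (insert 0 S)"
    using finite by (simp add: S_def)
  have anti: "c j \<le> c i" if "1 \<le> i" and "i \<le> j" for i j
    by (rule antimono_if_decreasing_steps) (use decreasing that in auto)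
  have beyond: "c j = 0" if "m < j" for j
  proof (rule ccontr)
    assume "c j \<noteq> 0"
    with that have "j \<in> insert 0 S"
      by (simp add: S_def)
    with that show False
      using Max_ge[OF fin, of j] by (simp add: m_def)
  qed
  have nonneg: "0 \<le> c j" if "1 \<le> j" for j
    using anti[OF that, of "Suc (max j m)"] beyond[of "Suc (max j m)"] by simp
  have "S = {1..m}"
  proof (intro subset_antisym subsetI)
    fix i assume "i \<in> S"
    then show "i \<in> {1..m}"
      using Max_ge[OF fin, of i] by (simp add: S_def m_def)
  next
    fix i assume i: "i \<in> {1..m}"
    then have "m \<in> S"
      using Max_in[OF fin] unfolding m_def by auto
    then have "0 < c m"
      using nonneg[of m] by (simp add: S_def)
    moreover have "c m \<le> c i"
      using anti i by simp
    ultimately show "i \<in> S"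
      using i by (simp add: S_def)
  qed
  with beyond[of "Suc m"] show ?thesis
    by (intro that) (simp_all add: S_def)
qed

lemma closure_of_real_image_eq:
  assumes "W \<subseteq> {a..b}" and "{a..b} \<subseteq> closure W"
  shows "closure (complex_of_real ` W) = complex_of_real ` {a..b}"
proof -
  have "closure W = {a..b}"
    using assms closure_minimal[OF assms(1)] by auto
  then show ?thesis
    using closure_injective_linear_image[of complex_of_real W] by (simp add: inj_of_real)
qed

section \<open>The closure of the c-numerical range\<close>

context self_adjoint
begin

lemma orthonormal_rotation:
  assumes u: "orthonormal m u" and z: "orthonormal m z"
    and perp: "\<forall>i\<in>{1..m}. \<forall>j\<in>{1..m}. ip (u i) (z j) = 0"
  shows "orthonormal m (\<lambda>i. sm (of_real (cos \<theta>)) (u i) + sm (of_real (sin \<theta>)) (z i))"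
  unfolding orthonormal_on_def
proof (intro ballI)
  fix i j assume i: "i \<in> {1..m}" and j: "j \<in> {1..m}"
  have "ip (z i) (u j) = 0"
    using perp i j ip_eq_0_commute by blast
  moreover have "of_real ((cos \<theta>)\<^sup>2) + of_real ((sin \<theta>)\<^sup>2) = (1 :: complex)"
    by (simp only: of_real_add[symmetric] sin_cos_squared_add2 of_real_1)
  ultimately show "ip (sm (of_real (cos \<theta>)) (u i) + sm (of_real (sin \<theta>)) (z i))
      (sm (of_real (cos \<theta>)) (u j) + sm (of_real (sin \<theta>)) (z j)) = (if i = j then 1 else 0)"
    using orthonormal_ip[OF u i j] orthonormal_ip[OF z i j] perp i j
    by (simp add: ip_add_left ip_add_right power2_eq_square algebra_simps del: of_real_power)
qed

lemma qform_rotation: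
  "qform (sm (of_real a) x + sm (of_real b) y)
     = a\<^sup>2 * qform x + b\<^sup>2 * qform y + a * b * (Re (ip (A x) y) + Re (ip (A y) x))"
  by (simp add: A_add A_sm ip_add_left ip_add_right power2_eq_square algebra_simps)

definition weighted_qform :: "(nat \<Rightarrow> real) \<Rightarrow> nat \<Rightarrow> (nat \<Rightarrow> 'a) \<Rightarrow> real" where
  "weighted_qform c m u = (\<Sum>j\<in>{1..m}. c j * qform (u j))"

lemma weighted_qform_rotation_IVT:
  assumes u: "orthonormal m u" and z: "orthonormal m z"
    and perp: "\<forall>i\<in>{1..m}. \<forall>j\<in>{1..m}. ip (u i) (z j) = 0"
    and y: "min (weighted_qform c m u) (weighted_qform c m z) \<le> y"
      "y \<le> max (weighted_qform c m u) (weighted_qform c m z)"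
  shows "\<exists>q. orthonormal m q \<and> weighted_qform c m q = y"
proof -
  define q where "q \<theta> i = sm (of_real (cos \<theta>)) (u i) + sm (of_real (sin \<theta>)) (z i)" for \<theta> i
  define g where "g \<theta> = weighted_qform c m (q \<theta>)" for \<theta>
  have g_eq: "g = (\<lambda>\<theta>. \<Sum>j\<in>{1..m}. c j * ((cos \<theta>)\<^sup>2 * qform (u j) + (sin \<theta>)\<^sup>2 * qform (z j)
      + cos \<theta> * sin \<theta> * (Re (ip (A (u j)) (z j)) + Re (ip (A (z j)) (u j)))))"
    by (simp add: g_def q_def weighted_qform_def qform_rotation fun_eq_iff)
  have "continuous_on {0..pi/2} g"
    unfolding g_eq by (intro continuous_intros)
  moreover have "g 0 = weighted_qform c m u" "g (pi/2) = weighted_qform c m z"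
    by (simp_all add: g_def q_def weighted_qform_def)
  ultimately have "\<exists>\<theta>. 0 \<le> \<theta> \<and> \<theta> \<le> pi/2 \<and> g \<theta> = y"
    using y IVT'[of g 0 y "pi/2"] IVT2'[of g "pi/2" y 0] by (cases "g 0 \<le> g (pi/2)") auto
  then show ?thesis
    using orthonormal_rotation[OF u z perp] unfolding g_def q_def by blast
qed

lemma exists_weighted_qform_between:
  assumes inf: "infinite_dimensional sm" and u: "orthonormal m u" and w: "orthonormal m w"
    and y: "weighted_qform c m u \<le> y" "y \<le> weighted_qform c m w"
  shows "\<exists>q. orthonormal m q \<and> weighted_qform c m q = y"
proof -
  \<comment> \<open>Route through a third tuple orthogonal to both, so that both rotations stay orthonormal.\<close>
  obtain z where z: "orthonormal m z" "\<forall>s\<in>u ` {1..m} \<union> w ` {1..m}. \<forall>j\<in>{1..m}. ip s (z j) = 0"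
    using exists_orthonormal_orthogonal[OF inf, of "u ` {1..m} \<union> w ` {1..m}" m] by blast
  then have perp: "\<forall>i\<in>{1..m}. \<forall>j\<in>{1..m}. ip (u i) (z j) = 0" "\<forall>i\<in>{1..m}. \<forall>j\<in>{1..m}. ip (w i) (z j) = 0"
    by auto
  show ?thesis
  proof (cases "y \<le> weighted_qform c m z")
    case True
    with y show ?thesis
      by (intro weighted_qform_rotation_IVT[OF u z(1) perp(1)]) auto
  next
    case False
    with y show ?thesis
      by (intro weighted_qform_rotation_IVT[OF w z(1) perp(2)]) auto
  qed
qed

lemma c_numerical_range_eq_weighted_qform:
  assumes inf: "infinite_dimensional sm" and sep: "hilbert_separable ip"
    and supp: "{j. 1 \<le> j \<and> c j \<noteq> 0} = {1..m}"
  shows "c_numerical_range ip c A = complex_of_real ` weighted_qform c m ` {u. orthonormal m u}"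
proof -
  have sum_eq: "(\<Sum>j\<in>{1..m}. complex_of_real (c j) * ip (A (e j)) (e j)) = complex_of_real (weighted_qform c m e)"
    for e
    by (simp add: weighted_qform_def ip_A_self_real[symmetric])
  have "c_numerical_range ip c A = (\<lambda>e. complex_of_real (weighted_qform c m e)) ` {e. onb ip e}"
    unfolding c_numerical_range_def supp sum_eq image_Collect ..
  also have "\<dots> = complex_of_real ` weighted_qform c m ` {e. onb ip e}"
    by (rule image_image[symmetric])
  also have "weighted_qform c m ` {e. onb ip e} = weighted_qform c m ` {u. orthonormal m u}"
  proof (intro subset_antisym image_subsetI)
    fix e assume "e \<in> {e. onb ip e}"
    then have "orthonormal m e"
      unfolding onb_def orthonormal_on_def by auto
    then show "weighted_qform c m e \<in> weighted_qform c m ` {u. orthonormal m u}"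
      by simp
  next
    fix u assume "u \<in> {u. orthonormal m u}"
    then obtain e where e: "onb ip e" "\<forall>i\<in>{1..m}. e i = u i"
      using orthonormal_extend_onb[OF inf sep] by blast
    have "weighted_qform c m u = weighted_qform c m e"
      unfolding weighted_qform_def using e(2) by (intro sum.cong) simp_all
    with e(1) show "weighted_qform c m u \<in> weighted_qform c m ` {e. onb ip e}"
      by (intro image_eqI[of _ _ e]) simp_all
  qed
  finally show ?thesis .
qed

lemma weighted_qform_bounds:
  assumes decreasing: "\<And>k. k \<in> {1..m} \<Longrightarrow> c (Suc k) \<le> c k" and "0 \<le> c (Suc m)"
    and u: "orthonormal m u"
  shows "(\<Sum>j\<in>{1..m}. c j * nu_k sm ip A j) \<le> weighted_qform c m u"
    and "weighted_qform c m u \<le> (\<Sum>j\<in>{1..m}. c j * lambda_k ip A j)"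
  unfolding weighted_qform_def
proof -
  show "(\<Sum>j\<in>{1..m}. c j * nu_k sm ip A j) \<le> (\<Sum>j\<in>{1..m}. c j * qform (u j))"
  proof (rule weighted_sum_le_if_partial_sums_le[OF _ decreasing \<open>0 \<le> c (Suc m)\<close>])
    fix k assume "k \<in> {1..m}"
    then show "(\<Sum>j\<in>{1..k}. nu_k sm ip A j) \<le> (\<Sum>j\<in>{1..k}. qform (u j))"
      using sum_nu_k_le_sum_qform[OF orthonormal_mono[OF u]] by simp
  qed
  show "(\<Sum>j\<in>{1..m}. c j * qform (u j)) \<le> (\<Sum>j\<in>{1..m}. c j * lambda_k ip A j)"
  proof (rule weighted_sum_le_if_partial_sums_le[OF _ decreasing \<open>0 \<le> c (Suc m)\<close>])
    fix k assume "k \<in> {1..m}"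
    then show "(\<Sum>j\<in>{1..k}. qform (u j)) \<le> (\<Sum>j\<in>{1..k}. lambda_k ip A j)"
      using sum_qform_le_sum_lambda_k[OF orthonormal_mono[OF u]] by simp
  qed
qed

lemma exists_weighted_qform_near_bounds:
  assumes inf: "infinite_dimensional sm" and nonneg: "\<And>j. j \<in> {1..m} \<Longrightarrow> 0 \<le> c j" and "0 < \<delta>"
  shows "\<exists>u. orthonormal m u \<and> (\<Sum>j\<in>{1..m}. c j * lambda_k ip A j) - \<delta> < weighted_qform c m u"
    and "\<exists>u. orthonormal m u \<and> weighted_qform c m u < (\<Sum>j\<in>{1..m}. c j * nu_k sm ip A j) + \<delta>"
proof -
  define C where "C = (\<Sum>j\<in>{1..m}. c j)"
  have "0 \<le> C"
    unfolding C_def by (rule sum_nonneg) (rule nonneg)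
  define \<epsilon> where "\<epsilon> = \<delta> / (C + 1)"
  have "0 < \<epsilon>" and "\<epsilon> * C < \<delta>"
    using \<open>0 < \<delta>\<close> \<open>0 \<le> C\<close> by (simp_all add: \<epsilon>_def field_simps)
  obtain u where u: "orthonormal m u" "\<forall>k\<in>{1..m}. lambda_k ip A k - \<epsilon> < qform (u k)"
    using exists_orthonormal_near_lambda_k[OF inf \<open>0 < \<epsilon>\<close>] by blast
  have "(\<Sum>j\<in>{1..m}. c j * lambda_k ip A j) - \<epsilon> * C = (\<Sum>j\<in>{1..m}. c j * (lambda_k ip A j - \<epsilon>))"
    by (simp add: C_def algebra_simps sum_subtractf sum_distrib_left)
  also have "\<dots> \<le> weighted_qform c m u"
    unfolding weighted_qform_def using u(2) nonneg by (intro sum_mono mult_left_mono) (auto intro: less_imp_le)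
  finally show "\<exists>u. orthonormal m u \<and> (\<Sum>j\<in>{1..m}. c j * lambda_k ip A j) - \<delta> < weighted_qform c m u"
    using u(1) \<open>\<epsilon> * C < \<delta>\<close> by (intro exI[of _ u]) simp
  obtain w where w: "orthonormal m w" "\<forall>k\<in>{1..m}. qform (w k) < nu_k sm ip A k + \<epsilon>"
    using exists_orthonormal_near_nu_k[OF inf \<open>0 < \<epsilon>\<close>] by blast
  have "weighted_qform c m w \<le> (\<Sum>j\<in>{1..m}. c j * (nu_k sm ip A j + \<epsilon>))"
    unfolding weighted_qform_def using w(2) nonneg by (intro sum_mono mult_left_mono) (auto intro: less_imp_le)
  also have "\<dots> = (\<Sum>j\<in>{1..m}. c j * nu_k sm ip A j) + \<epsilon> * C"
    by (simp add: C_def algebra_simps sum.distrib sum_distrib_left)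
  finally show "\<exists>u. orthonormal m u \<and> weighted_qform c m u < (\<Sum>j\<in>{1..m}. c j * nu_k sm ip A j) + \<delta>"
    using w(1) \<open>\<epsilon> * C < \<delta>\<close> by (intro exI[of _ w]) simp
qed

lemma interval_subset_closure_weighted_qform:
  assumes inf: "infinite_dimensional sm"
    and decreasing: "\<And>k. k \<in> {1..m} \<Longrightarrow> c (Suc k) \<le> c k" and "0 \<le> c (Suc m)"
  shows "{(\<Sum>j\<in>{1..m}. c j * nu_k sm ip A j) .. (\<Sum>j\<in>{1..m}. c j * lambda_k ip A j)}
           \<subseteq> closure (weighted_qform c m ` {u. orthonormal m u})"
    (is "{?\<alpha>..?\<beta>} \<subseteq> closure ?W")
proof
  fix t assume t: "t \<in> {?\<alpha>..?\<beta>}"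
  have nonneg: "0 \<le> c j" if "j \<in> {1..m}" for j
    using decreasing_weights_nonneg[where c = c and m = m, OF decreasing \<open>0 \<le> c (Suc m)\<close> that] .
  show "t \<in> closure ?W"
    unfolding closure_approachable
  proof (intro allI impI)
    fix \<delta> :: real assume "0 < \<delta>"
    obtain u where u: "orthonormal m u" "?\<beta> - \<delta> < weighted_qform c m u"
      using exists_weighted_qform_near_bounds(1)[where c = c and m = m, OF inf nonneg \<open>0 < \<delta>\<close>] by blast
    obtain w where w: "orthonormal m w" "weighted_qform c m w < ?\<alpha> + \<delta>"
      using exists_weighted_qform_near_bounds(2)[where c = c and m = m, OF inf nonneg \<open>0 < \<delta>\<close>] by blast
    have "?\<alpha> \<le> weighted_qform c m w" "weighted_qform c m u \<le> ?\<beta>"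
      using weighted_qform_bounds[where c = c and m = m, OF decreasing \<open>0 \<le> c (Suc m)\<close>] u(1) w(1)
      by auto
    \<comment> \<open>Values between the two are attained exactly; \<open>t\<close> outside them is within \<open>\<delta>\<close> of the nearer one.\<close>
    consider "t \<le> weighted_qform c m w" | "weighted_qform c m u \<le> t"
      | "weighted_qform c m w \<le> t" "t \<le> weighted_qform c m u"
      by linarith
    then show "\<exists>y\<in>?W. dist y t < \<delta>"
    proof cases
      case 1
      with w t \<open>?\<alpha> \<le> _\<close> show ?thesis
        by (intro bexI[of _ "weighted_qform c m w"]) (auto simp: dist_real_def)
    next
      case 2
      with u t \<open>_ \<le> ?\<beta>\<close> show ?thesis
        by (intro bexI[of _ "weighted_qform c m u"]) (auto simp: dist_real_def)
    next
      case 3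
      then obtain q where "orthonormal m q" "weighted_qform c m q = t"
        using exists_weighted_qform_between[OF inf w(1) u(1)] by blast
      with \<open>0 < \<delta>\<close> show ?thesis
        by (intro bexI[of _ t]) auto
    qed
  qed
qed

end

theorem lemma5p2:
  fixes sm :: "complex \<Rightarrow> 'a::ab_group_add \<Rightarrow> 'a"
    and ip :: "'a \<Rightarrow> 'a \<Rightarrow> complex"
    and A :: "'a \<Rightarrow> 'a"
    and c :: "nat \<Rightarrow> real"
  assumes H: "separable_inf_dim_hilbert sm ip"
    and A_sa: "self_adjoint_op sm ip A"
    and c_mono: "\<forall>j\<ge>1. c (Suc j) \<le> c j"
    and c_fin: "finite {j. 1 \<le> j \<and> c j \<noteq> 0}"
  shows "closure (c_numerical_range ip c A) =
         complex_of_real ` {(\<Sum>j\<in>{j. 1 \<le> j \<and> c j \<noteq> 0}. c j * nu_k sm ip A j) ..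
                            (\<Sum>j\<in>{j. 1 \<le> j \<and> c j \<noteq> 0}. c j * lambda_k ip A j)}"
proof -
  have inner: "complex_inner_space sm ip" and inf: "infinite_dimensional sm" and sep: "hilbert_separable ip"
    using H unfolding separable_inf_dim_hilbert_def by auto
  interpret self_adjoint sm ip A
    using inner A_sa by unfold_locales
  obtain m where supp: "{j. 1 \<le> j \<and> c j \<noteq> 0} = {1..m}" and "c (Suc m) = 0"
    using decreasing_finite_support[OF c_mono c_fin] by blast
  have decreasing: "\<And>k. k \<in> {1..m} \<Longrightarrow> c (Suc k) \<le> c k"
    using c_mono by simp
  show ?thesis
    unfolding supp c_numerical_range_eq_weighted_qform[OF inf sep supp]
  proof (rule closure_of_real_image_eq)
    show "weighted_qform c m ` {u. orthonormal m u}
        \<subseteq> {(\<Sum>j\<in>{1..m}. c j * nu_k sm ip A j)..(\<Sum>j\<in>{1..m}. c j * lambda_k ip A j)}"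
      using weighted_qform_bounds[where c = c and m = m, OF decreasing] \<open>c (Suc m) = 0\<close> by auto
    show "{(\<Sum>j\<in>{1..m}. c j * nu_k sm ip A j)..(\<Sum>j\<in>{1..m}. c j * lambda_k ip A j)}
        \<subseteq> closure (weighted_qform c m ` {u. orthonormal m u})"
      using interval_subset_closure_weighted_qform[where c = c and m = m, OF inf decreasing] \<open>c (Suc m) = 0\<close>
      by simp
  qed
qed

end
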